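(* Consider a translation-invariant, nearest-neighbor, frustration free quantum spin chain as described in the context, and let $m,n\ge1$. The Hermitian operator $K(-m,n)=G(-m,0)\,G(0,n)\,G(-m,0)$ (acting on $\mathcal{H}_{[-m,n]}$) has range contained in $\mathcal{G}(-m,0)\otimes\mathcal{G}(1,n)$; its eigenspace for eigenvalue $1$ is exactly $\mathcal{G}(-m,n)$; and $\varepsilon(m,n)$ equals the largest eigenvalue of $K(-m,n)$ that is less than $1$.
   Context: For each $x\in\mathbb{Z}$, $\mathcal{H}_x=\mathbb{C}^d$, $\mathcal{H}_\Lambda=\bigotimes_{x\in\Lambda}\mathcal{H}_x$. A fixed positive operator $h$ on $\mathbb{C}^d\otimes\mathbb{C}^d$ gives $h(x,x+1)$ on sites $x,x+1$; $H(c,d)=\sum_{x=c}^{d-1}h(x,x+1)$ for $c\le d$ (extended by the identity to larger intervals, $H(c,c)=0$). Frustration free: $\mathcal{G}(c,d):=\operatorname{Ker}H(c,d)\ne\{0\}$ for every interval $[c,d]$; here $\mathcal{G}(c,d)$ for the interval $[c,d]$ is regarded as a subspace of $\mathcal{H}_{[c,d]}$ when written in tensor products, and $G(c,d)$ is the orthogonal projection onto $\operatorname{Ker}H(c,d)$ (with $G(c,c)=1$). $\varepsilon(m,n)=\sup\{\langle\psi,G(0,n)\psi\rangle:\psi\in\mathcal{G}(-m,0),\ \psi\perp\mathcal{G}(-m,n),\ \|\psi\|=1\}$, computed in $\mathcal{H}_{[-m,n]}$. *)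

theory Defs
  imports Complex_Main
begin

text \<open>A basis configuration of the interval [a,b]
 is a map sigma :: int => nat with sigma x < d on [a,b] and sigma x = 0 elsewhere.
 A vector of H_[a,b] = (C^d)^{tensor [a,b]} is a complex function on configurations
 vanishing off the configurations of [a,b]. The two-site interaction h on C^d (x) C^d
 is given by its matrix entries  h i j k l = < i j | h | k l >  (i,j,k,l < d).\<close>

type_synonym config = "int \<Rightarrow> nat"
type_synonym vec = "config \<Rightarrow> complex"

definition confs :: "nat \<Rightarrow> int \<Rightarrow> int \<Rightarrow> config set" where
  "confs d a b = {\<sigma>. (\<forall>x. a \<le> x \<and> x \<le> b \<longrightarrow> \<sigma> x < d) \<and> (\<forall>x. \<not> (a \<le> x \<and> x \<le> b) \<longrightarrow> \<sigma> x = 0)}"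

definition vecs :: "nat \<Rightarrow> int \<Rightarrow> int \<Rightarrow> vec set" where
  "vecs d a b = {\<psi>. \<forall>\<sigma>. \<sigma> \<notin> confs d a b \<longrightarrow> \<psi> \<sigma> = 0}"

definition zero_vec :: vec where "zero_vec = (\<lambda>_. 0)"

definition inner_prod :: "nat \<Rightarrow> int \<Rightarrow> int \<Rightarrow> vec \<Rightarrow> vec \<Rightarrow> complex" where
  "inner_prod d a b \<phi> \<psi> = (\<Sum>\<sigma>\<in>confs d a b. cnj (\<phi> \<sigma>) * \<psi> \<sigma>)"

definition positive_two_site :: "nat \<Rightarrow> (nat \<Rightarrow> nat \<Rightarrow> nat \<Rightarrow> nat \<Rightarrow> complex) \<Rightarrow> bool" where
  "positive_two_site d h \<longleftrightarrow>
     (\<forall>v :: nat \<Rightarrow> nat \<Rightarrow> complex.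
        let q = (\<Sum>i<d. \<Sum>j<d. \<Sum>k<d. \<Sum>l<d. cnj (v i j) * h i j k l * v k l)
        in Im q = 0 \<and> Re q \<ge> 0)"

text \<open>h(x,x+1) acting on H_[a,b] (for a <= x < b).\<close>
definition hloc :: "nat \<Rightarrow> int \<Rightarrow> int \<Rightarrow> (nat \<Rightarrow> nat \<Rightarrow> nat \<Rightarrow> nat \<Rightarrow> complex) \<Rightarrow> int \<Rightarrow> vec \<Rightarrow> vec" where
  "hloc d a b h x \<psi> = (\<lambda>\<sigma>. if \<sigma> \<in> confs d a b then
       (\<Sum>k<d. \<Sum>l<d. h (\<sigma> x) (\<sigma> (x+1)) k l * \<psi> (\<sigma>(x := k, x + 1 := l))) else 0)"

text \<open>H(c,e) = sum_{x=c}^{e-1} h(x,x+1), acting on H_[a,b] with [c,e] contained in [a,b]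
 (extended by the identity); H(c,c) = 0.\<close>
definition Hint :: "nat \<Rightarrow> int \<Rightarrow> int \<Rightarrow> (nat \<Rightarrow> nat \<Rightarrow> nat \<Rightarrow> nat \<Rightarrow> complex) \<Rightarrow> int \<Rightarrow> int \<Rightarrow> vec \<Rightarrow> vec" where
  "Hint d a b h c e \<psi> = (\<lambda>\<sigma>. \<Sum>x\<in>{c..<e}. hloc d a b h x \<psi> \<sigma>)"

definition kerH :: "nat \<Rightarrow> int \<Rightarrow> int \<Rightarrow> (nat \<Rightarrow> nat \<Rightarrow> nat \<Rightarrow> nat \<Rightarrow> complex) \<Rightarrow> int \<Rightarrow> int \<Rightarrow> vec set" where
  "kerH d a b h c e = {\<psi> \<in> vecs d a b. Hint d a b h c e \<psi> = zero_vec}"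

definition proj :: "nat \<Rightarrow> int \<Rightarrow> int \<Rightarrow> vec set \<Rightarrow> vec \<Rightarrow> vec" where
  "proj d a b S \<psi> = (THE \<phi>. \<phi> \<in> S \<and> (\<forall>\<chi>\<in>S. inner_prod d a b \<chi> (\<lambda>\<sigma>. \<psi> \<sigma> - \<phi> \<sigma>) = 0))"

definition Gproj :: "nat \<Rightarrow> int \<Rightarrow> int \<Rightarrow> (nat \<Rightarrow> nat \<Rightarrow> nat \<Rightarrow> nat \<Rightarrow> complex) \<Rightarrow> int \<Rightarrow> int \<Rightarrow> vec \<Rightarrow> vec" where
  "Gproj d a b h c e = proj d a b (kerH d a b h c e)"

definition frustration_free :: "nat \<Rightarrow> (nat \<Rightarrow> nat \<Rightarrow> nat \<Rightarrow> nat \<Rightarrow> complex) \<Rightarrow> bool" where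
  "frustration_free d h \<longleftrightarrow> (\<forall>c e. c \<le> e \<longrightarrow> kerH d c e h c e \<noteq> {zero_vec})"

text \<open>Tensor product of phi in H_[a,b] and chi in H_[b+1,c], as vector in H_[a,c].\<close>
definition restr :: "int \<Rightarrow> int \<Rightarrow> config \<Rightarrow> config" where
  "restr a b \<sigma> = (\<lambda>x. if a \<le> x \<and> x \<le> b then \<sigma> x else 0)"

definition tens :: "nat \<Rightarrow> int \<Rightarrow> int \<Rightarrow> int \<Rightarrow> vec \<Rightarrow> vec \<Rightarrow> vec" where
  "tens d a b c \<phi> \<chi> = (\<lambda>\<sigma>. if \<sigma> \<in> confs d a c then \<phi> (restr a b \<sigma>) * \<chi> (restr (b+1) c \<sigma>) else 0)"

definition tensor_sub :: "nat \<Rightarrow> int \<Rightarrow> int \<Rightarrow> int \<Rightarrow> vec set \<Rightarrow> vec set \<Rightarrow> vec set" where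
  "tensor_sub d a b c S T = {\<psi>. \<exists>(N::nat) (coef :: nat \<Rightarrow> complex) \<phi> \<chi>.
      (\<forall>i<N. \<phi> i \<in> S \<and> \<chi> i \<in> T) \<and>
      \<psi> = (\<lambda>\<sigma>. \<Sum>i<N. coef i * tens d a b c (\<phi> i) (\<chi> i) \<sigma>)}"

text \<open>epsilon(m,n), computed in H_[-m,n]; supremum of a set of nonnegative reals, with the
 convention that the supremum of the empty set is 0.\<close>
definition eps :: "nat \<Rightarrow> (nat \<Rightarrow> nat \<Rightarrow> nat \<Rightarrow> nat \<Rightarrow> complex) \<Rightarrow> nat \<Rightarrow> nat \<Rightarrow> real" where
  "eps d h m n = (let a = - int m; b = int n in
     Sup (insert 0 {Re (inner_prod d a b \<psi> (Gproj d a b h 0 b \<psi>)) | \<psi>.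
        \<psi> \<in> kerH d a b h a 0 \<and> (\<forall>\<chi>\<in>kerH d a b h a b. inner_prod d a b \<chi> \<psi> = 0) \<and>
        inner_prod d a b \<psi> \<psi> = 1}))"

definition Kop :: "nat \<Rightarrow> (nat \<Rightarrow> nat \<Rightarrow> nat \<Rightarrow> nat \<Rightarrow> complex) \<Rightarrow> nat \<Rightarrow> nat \<Rightarrow> vec \<Rightarrow> vec" where
  "Kop d h m n \<psi> = (let a = - int m; b = int n in
     Gproj d a b h a 0 (Gproj d a b h 0 b (Gproj d a b h a 0 \<psi>)))"

end

theory Submission
  imports Defs "HOL-Analysis.Analysis" "HOL-Library.Function_Algebras"
begin

text \<open>
  Write \<open>P\<^sub>1\<close>, \<open>P\<^sub>2\<close> for the projections onto \<open>\<G>(-m,0)\<close> and \<open>\<G>(0,n)\<close> in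
  \<open>\<H>[-m,n]\<close>, so that \<open>K = P\<^sub>1 P\<^sub>2 P\<^sub>1\<close>. The range of \<open>K\<close> lies in \<open>\<G>(-m,0)\<close>, and also
  in the kernel of \<open>H(1,n)\<close>: \<open>\<G>(0,n)\<close> is contained in it, and \<open>P\<^sub>1\<close> commutes with
  \<open>H(1,n)\<close> because \<open>H(1,n)\<close> is Hermitian and preserves \<open>\<G>(-m,0)\<close>, its terms acting on
  sites disjoint from those of \<open>H(-m,0)\<close>. A vector in both kernels factors across the
  bond between the sites \<open>0\<close> and \<open>1\<close>.

  The remaining claims hold for any two subspaces of a finite-dimensional Hilbert space,
  once positivity of the interaction gives \<open>\<G>(-m,n) = \<G>(-m,0) \<inter> \<G>(0,n)\<close>. A fixed point
  \<open>f = P\<^sub>1 P\<^sub>2 P\<^sub>1 f\<close> satisfies \<open>\<parallel>f\<parallel> \<le> \<parallel>P\<^sub>2 f\<parallel> \<le> \<parallel>f\<parallel>\<close>, so it lies in both subspaces. On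
  the orthogonal complement of the intersection inside \<open>\<G>(-m,0)\<close> we have
  \<open>\<langle>f, K f\<rangle> = \<langle>f, P\<^sub>2 f\<rangle>\<close>, so \<open>\<epsilon>(m,n)\<close> is the maximum of a Rayleigh quotient of \<open>K\<close>
  there. It is attained by compactness, a maximiser is an eigenvector of \<open>K\<close>, and every
  eigenvector with eigenvalue in \<open>(0,1)\<close> lies in that complement.
\<close>

section \<open>Finite-dimensional inner product geometry\<close>

definition scale_fun :: "complex \<Rightarrow> ('a \<Rightarrow> complex) \<Rightarrow> 'a \<Rightarrow> complex" (infixr "*\<^sub>F" 75)
  where "c *\<^sub>F f = (\<lambda>x. c * f x)"

lemma scale_fun_apply [simp]: "(c *\<^sub>F f) x = c * f x"
  by (simp add: scale_fun_def)

lemma scale_fun_one [simp]: "1 *\<^sub>F f = f"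
  by (simp add: scale_fun_def)

lemma sum_fun_apply: "(\<Sum>i\<in>I. f i) x = (\<Sum>i\<in>I. f i x)"
  by (induction I rule: infinite_finite_induct) auto

definition inner_on :: "'a set \<Rightarrow> ('a \<Rightarrow> complex) \<Rightarrow> ('a \<Rightarrow> complex) \<Rightarrow> complex" where
  "inner_on C f g = (\<Sum>x\<in>C. cnj (f x) * g x)"

definition supported_on :: "'a set \<Rightarrow> ('a \<Rightarrow> complex) set" where
  "supported_on C = {f. \<forall>x. x \<notin> C \<longrightarrow> f x = 0}"

definition basis_vec :: "'a \<Rightarrow> 'a \<Rightarrow> complex" where
  "basis_vec y = (\<lambda>x. if x = y then 1 else 0)"

lemma inner_on_add_left: "inner_on C (f + g) k = inner_on C f k + inner_on C g k"
  by (simp add: inner_on_def sum.distrib algebra_simps)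

lemma inner_on_add_right: "inner_on C k (f + g) = inner_on C k f + inner_on C k g"
  by (simp add: inner_on_def sum.distrib algebra_simps)

lemma inner_on_diff_left: "inner_on C (f - g) k = inner_on C f k - inner_on C g k"
  by (simp add: inner_on_def sum_subtractf algebra_simps)

lemma inner_on_diff_right: "inner_on C k (f - g) = inner_on C k f - inner_on C k g"
  by (simp add: inner_on_def sum_subtractf algebra_simps)

lemma inner_on_scale_left: "inner_on C (c *\<^sub>F f) g = cnj c * inner_on C f g"
  by (simp add: inner_on_def sum_distrib_left algebra_simps)

lemma inner_on_scale_right: "inner_on C f (c *\<^sub>F g) = c * inner_on C f g"
  by (simp add: inner_on_def sum_distrib_left algebra_simps)

lemma inner_on_sum_left: "inner_on C (\<Sum>i\<in>I. f i) g = (\<Sum>i\<in>I. inner_on C (f i) g)"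
  by (simp add: inner_on_def sum_fun_apply sum_distrib_right sum.swap[of _ C])

lemma inner_on_sum_right: "inner_on C g (\<Sum>i\<in>I. f i) = (\<Sum>i\<in>I. inner_on C g (f i))"
  by (simp add: inner_on_def sum_fun_apply sum_distrib_left sum.swap[of _ C])

lemma inner_on_zero_left [simp]: "inner_on C 0 f = 0"
  and inner_on_zero_right [simp]: "inner_on C f 0 = 0"
  by (simp_all add: inner_on_def)

lemmas inner_on_simps =
  inner_on_add_left inner_on_add_right inner_on_diff_left inner_on_diff_right
  inner_on_scale_left inner_on_scale_right

lemma cnj_inner_on: "cnj (inner_on C f g) = inner_on C g f"
  by (simp add: inner_on_def mult.commute)

lemma inner_on_self: "inner_on C f f = of_real (\<Sum>x\<in>C. (cmod (f x))\<^sup>2)"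
  unfolding inner_on_def of_real_sum
  by (intro sum.cong refl) (metis complex_norm_square mult.commute of_real_power)

lemma Re_inner_on_self: "Re (inner_on C f f) = (\<Sum>x\<in>C. (cmod (f x))\<^sup>2)"
  by (simp only: inner_on_self Re_complex_of_real)

lemma Im_inner_on_self [simp]: "Im (inner_on C f f) = 0"
  by (simp add: inner_on_self)

lemma inner_on_self_real: "inner_on C f f = of_real (Re (inner_on C f f))"
  by (simp add: complex_eq_iff)

lemma Re_inner_on_self_nonneg: "0 \<le> Re (inner_on C f f)"
  by (simp add: inner_on_self sum_nonneg)

lemma inner_on_self_eq_zero:
  assumes "finite C" "f \<in> supported_on C"
  shows "inner_on C f f = 0 \<longleftrightarrow> f = 0"
proof
  assume "inner_on C f f = 0"
  then have "(\<Sum>x\<in>C. (cmod (f x))\<^sup>2) = 0"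
    by (metis inner_on_self of_real_eq_0_iff)
  then have "\<forall>x\<in>C. (cmod (f x))\<^sup>2 = 0"
    using assms(1) by (simp add: sum_nonneg_eq_0_iff)
  then show "f = 0"
    using assms(2) by (auto simp: supported_on_def fun_eq_iff)
qed simp

lemma Re_inner_on_self_pos:
  assumes "finite C" "f \<in> supported_on C" "f \<noteq> 0"
  shows "0 < Re (inner_on C f f)"
  using inner_on_self_eq_zero[OF assms(1,2)] assms(3) Re_inner_on_self_nonneg[of C f]
  by (metis inner_on_self_real of_real_0 order_le_imp_less_or_eq)

lemma inner_on_scale_both: "inner_on C (c *\<^sub>F f) (c *\<^sub>F g) = of_real ((cmod c)\<^sup>2) * inner_on C f g"
  unfolding inner_on_scale_left inner_on_scale_right complex_norm_square by (simp add: ac_simps)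

lemma normalize_vector:
  assumes "finite C" "f \<in> supported_on C" "f \<noteq> 0"
  obtains c where "inner_on C (c *\<^sub>F f) (c *\<^sub>F f) = 1"
proof
  let ?r = "Re (inner_on C f f)"
  have r: "1 / sqrt ?r * (1 / sqrt ?r) * ?r = 1"
    using Re_inner_on_self_pos[OF assms] by (simp add: field_simps)
  have "inner_on C (of_real (1 / sqrt ?r) *\<^sub>F f) (of_real (1 / sqrt ?r) *\<^sub>F f)
      = of_real (1 / sqrt ?r * (1 / sqrt ?r) * ?r)"
    by (subst inner_on_self_real) (simp add: inner_on_scale_left inner_on_scale_right)
  then show "inner_on C (of_real (1 / sqrt ?r) *\<^sub>F f) (of_real (1 / sqrt ?r) *\<^sub>F f) = 1"
    by (simp only: r of_real_1)
qed

definition subspace_on :: "'a set \<Rightarrow> ('a \<Rightarrow> complex) set \<Rightarrow> bool" where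
  "subspace_on C S \<longleftrightarrow> S \<subseteq> supported_on C \<and> 0 \<in> S \<and>
     (\<forall>f\<in>S. \<forall>g\<in>S. f + g \<in> S) \<and> (\<forall>c. \<forall>f\<in>S. c *\<^sub>F f \<in> S)"

lemma subspace_onD:
  assumes "subspace_on C S"
  shows "S \<subseteq> supported_on C" "0 \<in> S" "f \<in> S \<Longrightarrow> g \<in> S \<Longrightarrow> f + g \<in> S"
    "f \<in> S \<Longrightarrow> c *\<^sub>F f \<in> S"
  using assms by (auto simp: subspace_on_def)

lemma subspace_on_diff:
  assumes "subspace_on C S" "f \<in> S" "g \<in> S"
  shows "f - g \<in> S"
proof -
  have "f - g = f + (-1) *\<^sub>F g" by (simp add: fun_eq_iff)
  then show ?thesis using subspace_onD[OF assms(1)] assms(2,3) by metis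
qed

lemma subspace_on_sum:
  assumes "subspace_on C S" "\<And>i. i \<in> I \<Longrightarrow> f i \<in> S"
  shows "(\<Sum>i\<in>I. f i) \<in> S"
  using assms(2) subspace_onD[OF assms(1)]
  by (induction I rule: infinite_finite_induct) auto

definition orth_compl :: "'a set \<Rightarrow> ('a \<Rightarrow> complex) set \<Rightarrow> ('a \<Rightarrow> complex) set" where
  "orth_compl C T = {f. \<forall>g\<in>T. inner_on C g f = 0}"

lemma subspace_on_Int_orth_compl:
  assumes "subspace_on C S"
  shows "subspace_on C (S \<inter> orth_compl C T)"
  using assms by (auto simp: subspace_on_def orth_compl_def inner_on_simps)

definition orth_proj :: "'a set \<Rightarrow> ('a \<Rightarrow> complex) set \<Rightarrow> ('a \<Rightarrow> complex) \<Rightarrow> 'a \<Rightarrow> complex" where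
  "orth_proj C S f = (THE g. g \<in> S \<and> (\<forall>k\<in>S. inner_on C k (f - g) = 0))"

text \<open>The projection onto \<open>S\<close> is the one onto \<open>S'\<close> plus the component along \<open>s\<close>.\<close>
lemma orth_proj_exists_add_line:
  assumes S: "subspace_on C S" and S'_S: "S' \<subseteq> S"
    and s: "s \<in> S" "inner_on C s s \<noteq> 0" "\<And>k. k \<in> S' \<Longrightarrow> inner_on C s k = 0"
    and span: "\<And>k. k \<in> S \<Longrightarrow> \<exists>c. k - c *\<^sub>F s \<in> S'"
    and g': "g' \<in> S'" "\<And>k. k \<in> S' \<Longrightarrow> inner_on C k (f - g') = 0"
  shows "\<exists>g\<in>S. \<forall>k\<in>S. inner_on C k (f - g) = 0"
proof (intro bexI ballI)
  define g where "g = g' + (inner_on C s f / inner_on C s s) *\<^sub>F s"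
  show "g \<in> S" unfolding g_def using subspace_onD[OF S] S'_S g'(1) s(1) by blast
  have fg: "f - g = (f - g') - (inner_on C s f / inner_on C s s) *\<^sub>F s"
    by (simp add: g_def fun_eq_iff)
  have s_fg: "inner_on C s (f - g) = 0"
    using s(2) s(3)[OF g'(1)] by (simp add: fg inner_on_simps)
  fix k assume "k \<in> S"
  then obtain c where k': "k - c *\<^sub>F s \<in> S'" using span by blast
  have "inner_on C (k - c *\<^sub>F s) s = 0"
    using s(3)[OF k'] cnj_inner_on[of C s "k - c *\<^sub>F s"] by simp
  then have "inner_on C (k - c *\<^sub>F s) (f - g) = 0"
    using g'(2)[OF k'] by (simp add: fg inner_on_diff_right inner_on_scale_right)
  moreover have "k = (k - c *\<^sub>F s) + c *\<^sub>F s" by simp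
  ultimately show "inner_on C k (f - g) = 0"
    by (metis s_fg inner_on_add_left inner_on_scale_left mult_zero_right add_0)
qed

text \<open>Induction on a finite set \<open>D\<close> carrying the supports: the vectors of \<open>S\<close> vanishing at
  \<open>\<tau>\<close> are supported in \<open>D - {\<tau>}\<close>, and together with one more vector they span \<open>S\<close>.\<close>
lemma orth_proj_exists_supported:
  assumes "finite C" "finite D" "D \<subseteq> C" "subspace_on C S" "S \<subseteq> supported_on D"
  shows "\<exists>g\<in>S. \<forall>k\<in>S. inner_on C k (f - g) = 0"
  using assms(2-)
proof (induction D arbitrary: S f rule: finite_induct)
  case empty
  then have "S = {0}"
    using subspace_onD(2) by (auto simp: supported_on_def fun_eq_iff)
  then show ?case by (simp add: inner_on_def)
next
  case (insert \<tau> D)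
  note S = insert.prems(2)
  define S' where "S' = {k \<in> S. k \<tau> = 0}"
  have "subspace_on C S'"
    using S unfolding S'_def subspace_on_def by auto
  moreover have "S' \<subseteq> supported_on D"
    using insert.prems(3) by (auto simp: S'_def supported_on_def)
  ultimately have "\<exists>g\<in>S'. \<forall>k\<in>S'. inner_on C k (f - g) = 0" for f
    using insert.IH insert.prems(1) by blast
  then obtain P where P_in: "\<And>f. P f \<in> S'"
    and P_orth: "\<And>f k. k \<in> S' \<Longrightarrow> inner_on C k (f - P f) = 0"
    by metis
  show ?case
  proof (cases "S' = S")
    case True
    then show ?thesis using P_in P_orth by metis
  next
    case False
    then obtain s where s: "s \<in> S" "s \<tau> \<noteq> 0" unfolding S'_def by auto
    have PS: "P f \<in> S" for f using P_in by (simp add: S'_def)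
    define s' where "s' = s - P s"
    have s'S: "s' \<in> S" unfolding s'_def by (rule subspace_on_diff[OF S s(1) PS])
    have s'\<tau>: "s' \<tau> = s \<tau>" using P_in[of s] by (simp add: s'_def S'_def)
    have "s' \<noteq> 0" using s'\<tau> s(2) by auto
    moreover have "s' \<in> supported_on C" using s'S subspace_onD(1)[OF S] by blast
    ultimately have norm: "inner_on C s' s' \<noteq> 0"
      using inner_on_self_eq_zero[OF assms(1)] by blast
    have perp: "inner_on C s' k = 0" if "k \<in> S'" for k
      using P_orth[OF that, of s] cnj_inner_on[of C k s'] by (simp add: s'_def)
    have span: "\<exists>c. k - c *\<^sub>F s' \<in> S'" if "k \<in> S" for k
      using subspace_on_diff[OF S that subspace_onD(4)[OF S s'S], of "k \<tau> / s' \<tau>"] s'\<tau> s(2)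
      by (auto simp: S'_def)
    have "S' \<subseteq> S" by (auto simp: S'_def)
    from orth_proj_exists_add_line[OF S this s'S norm perp span P_in P_orth]
    show ?thesis .
  qed
qed

locale finite_subspace =
  fixes C :: "'a set" and S :: "('a \<Rightarrow> complex) set"
  assumes finite_carrier: "finite C" and subspace: "subspace_on C S"
begin

lemma proj_unique:
  assumes "g \<in> S" "\<And>k. k \<in> S \<Longrightarrow> inner_on C k (f - g) = 0"
    and "g' \<in> S" "\<And>k. k \<in> S \<Longrightarrow> inner_on C k (f - g') = 0"
  shows "g = g'"
proof -
  have diff: "g - g' \<in> S" using subspace_on_diff[OF subspace assms(1,3)] .
  have "inner_on C (g - g') (g - g') = inner_on C (g - g') (f - g') - inner_on C (g - g') (f - g)"
    by (simp add: inner_on_diff_right)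
  also have "\<dots> = 0" using assms(2,4) diff by simp
  finally show ?thesis
    using inner_on_self_eq_zero[OF finite_carrier] diff subspace_onD(1)[OF subspace] by auto
qed

lemma proj_in: "orth_proj C S f \<in> S"
  and proj_orthogonal: "k \<in> S \<Longrightarrow> inner_on C k (f - orth_proj C S f) = 0"
proof -
  obtain g where "g \<in> S" "\<forall>k\<in>S. inner_on C k (f - g) = 0"
    using orth_proj_exists_supported[OF finite_carrier finite_carrier order_refl subspace
        subspace_onD(1)[OF subspace]] by blast
  then have "\<exists>!g. g \<in> S \<and> (\<forall>k\<in>S. inner_on C k (f - g) = 0)"
    using proj_unique by blast
  then have "orth_proj C S f \<in> S \<and> (\<forall>k\<in>S. inner_on C k (f - orth_proj C S f) = 0)"
    unfolding orth_proj_def by (rule theI')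
  then show "orth_proj C S f \<in> S" "k \<in> S \<Longrightarrow> inner_on C k (f - orth_proj C S f) = 0"
    by auto
qed

lemma proj_orthogonal_sym: "k \<in> S \<Longrightarrow> inner_on C (f - orth_proj C S f) k = 0"
  using proj_orthogonal cnj_inner_on by (metis complex_cnj_zero)

lemma proj_supported: "orth_proj C S f \<in> supported_on C"
  using proj_in subspace_onD(1)[OF subspace] by blast

lemma proj_eqI:
  assumes "g \<in> S" "\<And>k. k \<in> S \<Longrightarrow> inner_on C k (f - g) = 0"
  shows "orth_proj C S f = g"
  using proj_unique[OF proj_in proj_orthogonal assms] .

lemma proj_id: "f \<in> S \<Longrightarrow> orth_proj C S f = f"
  by (rule proj_eqI) simp_all

lemma proj_zero: "orth_proj C S 0 = 0"
  using proj_id subspace_onD(2)[OF subspace] .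

lemma proj_add: "orth_proj C S (f + g) = orth_proj C S f + orth_proj C S g"
proof (rule proj_eqI)
  have eq: "f + g - (orth_proj C S f + orth_proj C S g) = (f - orth_proj C S f) + (g - orth_proj C S g)"
    by (simp add: fun_eq_iff)
  show "inner_on C k (f + g - (orth_proj C S f + orth_proj C S g)) = 0" if "k \<in> S" for k
    unfolding eq inner_on_add_right using proj_orthogonal[OF that] by simp
qed (rule subspace_onD(3)[OF subspace proj_in proj_in])

lemma proj_scale: "orth_proj C S (c *\<^sub>F f) = c *\<^sub>F orth_proj C S f"
proof (rule proj_eqI)
  have "c *\<^sub>F f - c *\<^sub>F orth_proj C S f = c *\<^sub>F (f - orth_proj C S f)"
    by (simp add: fun_eq_iff algebra_simps)
  then show "inner_on C k (c *\<^sub>F f - c *\<^sub>F orth_proj C S f) = 0" if "k \<in> S" for k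
    using proj_orthogonal[OF that] by (simp add: inner_on_scale_right)
qed (rule subspace_onD(4)[OF subspace proj_in])

lemma proj_hermitian: "inner_on C f (orth_proj C S g) = inner_on C (orth_proj C S f) g"
proof -
  have "inner_on C f (orth_proj C S g) = inner_on C (orth_proj C S f) (orth_proj C S g)"
    using proj_orthogonal_sym[OF proj_in, of f g] by (simp add: inner_on_diff_left)
  also have "\<dots> = inner_on C (orth_proj C S f) g"
    using proj_orthogonal[OF proj_in, of f g] by (simp add: inner_on_diff_right)
  finally show ?thesis .
qed

lemma proj_quadratic: "inner_on C f (orth_proj C S f) = inner_on C (orth_proj C S f) (orth_proj C S f)"
  using proj_orthogonal[OF proj_in, of f f] proj_hermitian[of f f]
  by (simp add: inner_on_diff_right)

lemma proj_pythagoras: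
  "inner_on C f f = inner_on C (orth_proj C S f) (orth_proj C S f)
      + inner_on C (f - orth_proj C S f) (f - orth_proj C S f)"
proof -
  let ?p = "orth_proj C S f"
  have "inner_on C f f = inner_on C (?p + (f - ?p)) (?p + (f - ?p))" by simp
  also have "\<dots> = inner_on C ?p ?p + inner_on C (f - ?p) (f - ?p)"
    unfolding inner_on_add_left inner_on_add_right
    using proj_orthogonal[OF proj_in, of f] proj_orthogonal_sym[OF proj_in, of f] by simp
  finally show ?thesis .
qed

lemma proj_norm_le: "Re (inner_on C (orth_proj C S f) (orth_proj C S f)) \<le> Re (inner_on C f f)"
  using proj_pythagoras[of f] Re_inner_on_self_nonneg[of C "f - orth_proj C S f"] by simp

lemma proj_norm_eq_imp_fixed:
  assumes "f \<in> supported_on C"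
    and "Re (inner_on C (orth_proj C S f) (orth_proj C S f)) = Re (inner_on C f f)"
  shows "orth_proj C S f = f"
proof -
  have "Re (inner_on C (f - orth_proj C S f) (f - orth_proj C S f)) = 0"
    using proj_pythagoras[of f] assms(2) by simp
  then have "inner_on C (f - orth_proj C S f) (f - orth_proj C S f) = 0"
    by (simp add: complex_eq_iff)
  moreover have "f - orth_proj C S f \<in> supported_on C"
    using assms(1) proj_supported by (auto simp: supported_on_def)
  ultimately show ?thesis
    using inner_on_self_eq_zero[OF finite_carrier] by simp
qed

end

lemma basis_vec_inner_on [simp]:
  assumes "finite C" "x \<in> C"
  shows "inner_on C (basis_vec x) f = f x"
proof -
  have "inner_on C (basis_vec x) f = (\<Sum>y\<in>C. if y = x then f x else 0)"
    unfolding inner_on_def by (intro sum.cong) (auto simp: basis_vec_def)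
  then show ?thesis using assms by simp
qed

lemma basis_vec_same [simp]: "basis_vec x x = 1"
  by (simp add: basis_vec_def)

lemma inner_on_basis_vec [simp]:
  "finite C \<Longrightarrow> x \<in> C \<Longrightarrow> inner_on C f (basis_vec x) = cnj (f x)"
  by (metis basis_vec_inner_on cnj_inner_on)

definition hermitian_on :: "'a set \<Rightarrow> (('a \<Rightarrow> complex) \<Rightarrow> 'a \<Rightarrow> complex) \<Rightarrow> bool" where
  "hermitian_on C A \<longleftrightarrow> (\<forall>f g. inner_on C f (A g) = inner_on C (A f) g)"

definition linear_op :: "(('a \<Rightarrow> complex) \<Rightarrow> 'b \<Rightarrow> complex) \<Rightarrow> bool" where
  "linear_op A \<longleftrightarrow> (\<forall>f g. A (f + g) = A f + A g) \<and> (\<forall>c f. A (c *\<^sub>F f) = c *\<^sub>F A f)"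

lemma hermitian_onD: "hermitian_on C A \<Longrightarrow> inner_on C f (A g) = inner_on C (A f) g"
  by (simp add: hermitian_on_def)

lemma hermitian_on_quadratic_real:
  assumes "hermitian_on C A"
  shows "inner_on C f (A f) = of_real (Re (inner_on C f (A f)))"
proof -
  have "cnj (inner_on C f (A f)) = inner_on C f (A f)"
    by (simp add: cnj_inner_on hermitian_onD[OF assms])
  then show ?thesis by (simp add: complex_eq_iff)
qed

lemma hermitian_on_sandwich:
  assumes "hermitian_on C A" "hermitian_on C B"
  shows "hermitian_on C (\<lambda>f. A (B (A f)))"
  unfolding hermitian_on_def
proof (intro allI)
  fix f g
  have "inner_on C f (A (B (A g))) = inner_on C (A f) (B (A g))"
    by (rule hermitian_onD[OF assms(1)])
  also have "\<dots> = inner_on C (B (A f)) (A g)"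
    by (rule hermitian_onD[OF assms(2)])
  also have "\<dots> = inner_on C (A (B (A f))) g"
    by (rule hermitian_onD[OF assms(1)])
  finally show "inner_on C f (A (B (A g))) = inner_on C (A (B (A f))) g" .
qed

lemma linear_op_add: "linear_op A \<Longrightarrow> A (f + g) = A f + A g"
  and linear_op_scale: "linear_op A \<Longrightarrow> A (c *\<^sub>F f) = c *\<^sub>F A f"
  by (simp_all add: linear_op_def)

lemma linear_op_diff: "linear_op A \<Longrightarrow> A (f - g) = A f - A g"
proof -
  assume A: "linear_op A"
  have eq: "f - g = f + (-1) *\<^sub>F g" by (simp add: fun_eq_iff)
  have "A (f - g) = A f + (-1) *\<^sub>F A g"
    unfolding eq linear_op_add[OF A] linear_op_scale[OF A] ..
  then show ?thesis by (simp add: fun_eq_iff)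
qed

lemma linear_op_zero: "linear_op A \<Longrightarrow> A 0 = 0"
  using linear_op_diff[of A 0 0] by simp

lemma linear_op_compose: "linear_op A \<Longrightarrow> linear_op B \<Longrightarrow> linear_op (\<lambda>f. A (B f))"
  by (simp add: linear_op_def)

lemma eigenvectors_orthogonal:
  assumes "hermitian_on C A" "A f = of_real \<mu> *\<^sub>F f" "A g = of_real \<nu> *\<^sub>F g" "\<mu> \<noteq> \<nu>"
  shows "inner_on C f g = 0"
proof -
  have "of_real \<nu> * inner_on C f g = inner_on C (A f) g"
    using hermitian_onD[OF assms(1), of f g] assms(3) by (simp add: inner_on_scale_right)
  also have "\<dots> = of_real \<mu> * inner_on C f g"
    using assms(2) by (simp add: inner_on_scale_left)
  finally show ?thesis using assms(4) by simp
qed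

lemma hermitian_on_id: "hermitian_on C (\<lambda>f. f)"
  and linear_op_id: "linear_op (\<lambda>f. f)"
  by (simp_all add: hermitian_on_def linear_op_def)

lemma Re_quadratic_along_line:
  assumes A: "hermitian_on C A" "linear_op A"
  shows "Re (inner_on C (f + of_real t *\<^sub>F k) (A (f + of_real t *\<^sub>F k)))
    = Re (inner_on C f (A f)) + 2 * t * Re (inner_on C k (A f)) + t\<^sup>2 * Re (inner_on C k (A k))"
proof -
  have "inner_on C f (A k) = cnj (inner_on C k (A f))"
    by (simp add: hermitian_onD[OF A(1)] cnj_inner_on)
  then show ?thesis
    by (simp add: linear_op_add[OF A(2)] linear_op_scale[OF A(2)] inner_on_simps
        power2_eq_square algebra_simps)
qed

context finite_subspace
begin

lemma proj_hermitian_on: "hermitian_on C (orth_proj C S)"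
  by (simp add: hermitian_on_def proj_hermitian)

lemma proj_linear_op: "linear_op (orth_proj C S)"
  by (simp add: linear_op_def proj_add proj_scale)

lemma proj_commute:
  assumes "hermitian_on C A" "linear_op A" "\<And>f. f \<in> S \<Longrightarrow> A f \<in> S"
  shows "orth_proj C S (A f) = A (orth_proj C S f)"
proof (rule proj_eqI)
  show "A (orth_proj C S f) \<in> S" using assms(3) proj_in by blast
  show "inner_on C k (A f - A (orth_proj C S f)) = 0" if "k \<in> S" for k
    using proj_orthogonal[OF assms(3)[OF that]]
    by (simp add: linear_op_diff[OF assms(2), symmetric] hermitian_onD[OF assms(1)])
qed

lemma proj_expansion: "orth_proj C S f = (\<Sum>x\<in>C. f x *\<^sub>F orth_proj C S (basis_vec x))"
proof (rule proj_eqI)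
  show "(\<Sum>x\<in>C. f x *\<^sub>F orth_proj C S (basis_vec x)) \<in> S"
    by (intro subspace_on_sum[OF subspace] subspace_onD(4)[OF subspace] proj_in)
  fix k assume k: "k \<in> S"
  have "inner_on C k (orth_proj C S (basis_vec x)) = cnj (k x)" if "x \<in> C" for x
    using proj_orthogonal[OF k, of "basis_vec x"] finite_carrier that
    by (simp add: inner_on_diff_right)
  then have "inner_on C k (\<Sum>x\<in>C. f x *\<^sub>F orth_proj C S (basis_vec x)) = (\<Sum>x\<in>C. cnj (k x) * f x)"
    by (simp add: inner_on_sum_right inner_on_scale_right mult.commute)
  then show "inner_on C k (f - (\<Sum>x\<in>C. f x *\<^sub>F orth_proj C S (basis_vec x))) = 0"
    by (simp add: inner_on_diff_right) (simp add: inner_on_def)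
qed

end

section \<open>Rayleigh quotients and eigenvalues\<close>

lemma continuous_on_fun_apply [continuous_intros]:
  "continuous_on X (\<lambda>f :: 'a \<Rightarrow> 'b :: topological_space. f x)"
  by (rule continuous_on_subset[OF continuous_on_product_coordinates]) simp

lemma continuous_on_inner_on [continuous_intros]:
  assumes "\<And>x. continuous_on X (\<lambda>f. g f x)" "\<And>x. continuous_on X (\<lambda>f. k f x)"
  shows "continuous_on X (\<lambda>f. inner_on C (g f) (k f))"
  unfolding inner_on_def by (intro continuous_intros assms)

lemma (in finite_subspace) continuous_on_proj [continuous_intros]:
  "continuous_on X (\<lambda>f. orth_proj C S f x)"
  by (subst proj_expansion, simp only: sum_fun_apply scale_fun_apply)
    (intro continuous_on_sum continuous_on_mult continuous_on_fun_apply continuous_on_const)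

lemma (in finite_subspace) closed_subspace: "closed S"
proof -
  have "S = (\<Inter>x. {f. orth_proj C S f x = f x})"
  proof (intro set_eqI iffI)
    fix f assume "f \<in> (\<Inter>x. {f. orth_proj C S f x = f x})"
    then have "orth_proj C S f = f" by (simp add: fun_eq_iff)
    then show "f \<in> S" using proj_in by metis
  qed (simp add: proj_id)
  also have "closed \<dots>"
    by (intro closed_INT ballI closed_Collect_eq continuous_intros)
  finally show ?thesis .
qed

lemma closed_orth_compl: "closed (orth_compl C T)"
proof -
  have "orth_compl C T = (\<Inter>g\<in>T. {f. inner_on C g f = 0})"
    by (auto simp: orth_compl_def)
  also have "closed \<dots>"
    by (intro closed_INT ballI closed_Collect_eq continuous_intros)
  finally show ?thesis .
qed

lemma closed_unit_sphere: "closed {f. inner_on C f f = 1}"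
  by (intro closed_Collect_eq continuous_intros)

lemma compact_unit_vectors:
  assumes "finite C" "X \<subseteq> supported_on C" "closed X" "\<And>f. f \<in> X \<Longrightarrow> inner_on C f f = 1"
  shows "compact X"
proof -
  define B where "B = PiE UNIV (\<lambda>x. if x \<in> C then cball (0 :: complex) 1 else {0})"
  have "compactin (product_topology (\<lambda>_. euclidean) UNIV) B"
    unfolding B_def compactin_PiE by simp
  then have "compact B"
    by (simp add: euclidean_product_topology)
  moreover have "X \<subseteq> B"
  proof
    fix f assume f: "f \<in> X"
    have "cmod (f x) \<le> 1" if "x \<in> C" for x
    proof -
      have "(cmod (f x))\<^sup>2 \<le> (\<Sum>y\<in>C. (cmod (f y))\<^sup>2)"
        by (rule member_le_sum[OF that _ assms(1)]) simp
      also have "\<dots> = 1"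
        using Re_inner_on_self[of C f] assms(4)[OF f] by simp
      finally show ?thesis by (simp add: power_le_one_iff)
    qed
    then show "f \<in> B" using f assms(2) by (auto simp: B_def supported_on_def)
  qed
  ultimately show ?thesis
    using compact_Int_closed[OF _ assms(3)] by (metis inf.absorb_iff2)
qed

lemma nonneg_quadratic_linear_coeff_zero:
  fixes p q :: real
  assumes "0 \<le> q" and nonneg: "\<And>t. 0 \<le> 2 * t * p + t\<^sup>2 * q"
  shows "p = 0"
proof (rule ccontr)
  assume "p \<noteq> 0"
  define t where "t = - p / (q + 1)"
  have t: "t * (q + 1) = - p" using assms(1) by (simp add: t_def)
  have "(q + 1)\<^sup>2 * (2 * t * p + t\<^sup>2 * q) = 2 * (t * (q + 1)) * (q + 1) * p + (t * (q + 1))\<^sup>2 * q"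
    by (simp add: algebra_simps power2_eq_square)
  also have "\<dots> = - (p\<^sup>2 * (q + 2))"
    unfolding t by (simp add: algebra_simps power2_eq_square)
  finally have "(q + 1)\<^sup>2 * (2 * t * p + t\<^sup>2 * q) = - (p\<^sup>2 * (q + 2))" .
  moreover have "0 < p\<^sup>2 * (q + 2)" using \<open>p \<noteq> 0\<close> assms(1) by simp
  moreover have "0 \<le> (q + 1)\<^sup>2 * (2 * t * p + t\<^sup>2 * q)" using nonneg[of t] by simp
  ultimately show False by linarith
qed

lemma rayleigh_bound:
  assumes C: "finite C" and R: "subspace_on C R" and A: "linear_op A"
    and max: "\<And>f. f \<in> R \<Longrightarrow> inner_on C f f = 1 \<Longrightarrow> Re (inner_on C f (A f)) \<le> l"
    and f: "f \<in> R"
  shows "Re (inner_on C f (A f)) \<le> l * Re (inner_on C f f)"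
proof (cases "f = 0")
  case True
  then show ?thesis using linear_op_zero[OF A] by simp
next
  case False
  obtain c where c: "inner_on C (c *\<^sub>F f) (c *\<^sub>F f) = 1"
    using normalize_vector[OF C _ False] f subspace_onD(1)[OF R] by blast
  then have "Re (of_real ((cmod c)\<^sup>2) * inner_on C f f) = 1"
    by (simp only: inner_on_scale_both one_complex.sel)
  then have norm: "(cmod c)\<^sup>2 * Re (inner_on C f f) = 1"
    by simp
  then have pos: "0 < (cmod c)\<^sup>2"
    by (cases "c = 0") simp_all
  have "(cmod c)\<^sup>2 * Re (inner_on C f (A f)) = Re (inner_on C (c *\<^sub>F f) (A (c *\<^sub>F f)))"
    by (simp add: linear_op_scale[OF A] inner_on_scale_both)
  also have "\<dots> \<le> l" using max subspace_onD(4)[OF R f] c by blast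
  also have "\<dots> = (cmod c)\<^sup>2 * (l * Re (inner_on C f f))"
    using norm by (metis mult.left_commute mult.right_neutral)
  finally show ?thesis using pos by simp
qed

lemma rayleigh_maximizer_eigenvector:
  assumes C: "finite C" and R: "subspace_on C R" and A: "hermitian_on C A" "linear_op A"
    and invariant: "\<And>f. f \<in> R \<Longrightarrow> A f \<in> R"
    and u: "u \<in> R" "inner_on C u u = 1"
    and max: "\<And>f. f \<in> R \<Longrightarrow> inner_on C f f = 1 \<Longrightarrow>
                 Re (inner_on C f (A f)) \<le> Re (inner_on C u (A u))"
  shows "A u = of_real (Re (inner_on C u (A u))) *\<^sub>F u"
proof -
  define l where "l = Re (inner_on C u (A u))"
  have bound: "Re (inner_on C f (A f)) \<le> l * Re (inner_on C f f)" if "f \<in> R" for f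
    using rayleigh_bound[OF C R A(2) max that] unfolding l_def .
  have uAu: "inner_on C u (A u) = of_real l"
    using hermitian_on_quadratic_real[OF A(1)] unfolding l_def by blast
  define w where "w = A u - of_real l *\<^sub>F u"
  have w: "w \<in> R"
    unfolding w_def by (rule subspace_on_diff[OF R invariant[OF u(1)] subspace_onD(4)[OF R u(1)]])
  have Au: "A u = w + of_real l *\<^sub>F u" by (simp add: w_def)
  have uw: "inner_on C u w = 0"
    by (simp add: w_def inner_on_simps u(2) uAu)
  define W where "W = Re (inner_on C w w)"
  have ww: "inner_on C w w = of_real W"
    unfolding W_def by (rule inner_on_self_real)
  have wu: "inner_on C w u = 0"
    using cnj_inner_on[of C u w] uw by simp
  have wAu: "inner_on C w (A u) = of_real W"
    unfolding Au by (simp add: inner_on_simps wu ww)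
  \<comment> \<open>Along the line \<open>u + t w\<close> the bound is quadratic in \<open>t\<close>, with linear coefficient \<open>-2\<parallel>w\<parallel>\<^sup>2\<close>.\<close>
  have "0 \<le> 2 * t * (- W) + t\<^sup>2 * (l * W - Re (inner_on C w (A w)))" for t :: real
  proof -
    let ?x = "u + of_real t *\<^sub>F w"
    have "?x \<in> R" using subspace_onD[OF R] u(1) w by blast
    then have "Re (inner_on C ?x (A ?x)) \<le> l * Re (inner_on C ?x ?x)" by (rule bound)
    then have "l + 2 * t * W + t\<^sup>2 * Re (inner_on C w (A w)) \<le> l * (1 + t\<^sup>2 * W)"
      unfolding Re_quadratic_along_line[OF A] Re_quadratic_along_line[OF hermitian_on_id linear_op_id]
      by (simp add: uAu wAu u(2) wu ww)
    then show ?thesis by (simp add: algebra_simps)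
  qed
  moreover have "0 \<le> l * W - Re (inner_on C w (A w))"
    using bound[OF w] by (simp add: W_def)
  ultimately have "- W = 0"
    using nonneg_quadratic_linear_coeff_zero by blast
  then have "w = 0"
    using inner_on_self_eq_zero[OF C] subspace_onD(1)[OF R] w ww by auto
  then show ?thesis using Au unfolding l_def by simp
qed

lemma bessel_inequality:
  assumes "finite G"
    and norm: "\<And>i. i \<in> G \<Longrightarrow> inner_on C (u i) (u i) = 1"
    and orth: "\<And>i j. i \<in> G \<Longrightarrow> j \<in> G \<Longrightarrow> i \<noteq> j \<Longrightarrow> inner_on C (u i) (u j) = 0"
  shows "(\<Sum>i\<in>G. (cmod (inner_on C (u i) f))\<^sup>2) \<le> Re (inner_on C f f)"
proof -
  define c where "c i = inner_on C (u i) f" for i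
  define N where "N = (\<Sum>i\<in>G. (cmod (c i))\<^sup>2)"
  define s where "s = (\<Sum>i\<in>G. c i *\<^sub>F u i)"
  have cc: "cnj (c i) * c i = of_real ((cmod (c i))\<^sup>2)" for i
    by (metis complex_norm_square mult.commute)
  have us: "inner_on C (u i) s = c i" if "i \<in> G" for i
  proof -
    have "inner_on C (u i) s = (\<Sum>j\<in>G. c j * inner_on C (u i) (u j))"
      by (simp add: s_def inner_on_sum_right inner_on_scale_right)
    also have "\<dots> = (\<Sum>j\<in>G. if j = i then c i else 0)"
      using norm orth that by (intro sum.cong) auto
    also have "\<dots> = c i" using assms(1) that by simp
    finally show ?thesis .
  qed
  have sg: "inner_on C s g = (\<Sum>i\<in>G. cnj (c i) * inner_on C (u i) g)" for g
    by (simp add: s_def inner_on_sum_left inner_on_scale_left)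
  have sf: "inner_on C s f = of_real N"
    unfolding sg N_def of_real_sum by (simp add: c_def[symmetric] cc)
  have ss: "inner_on C s s = of_real N"
    unfolding sg N_def of_real_sum by (intro sum.cong) (simp_all add: us cc)
  have fs: "inner_on C f s = of_real N"
    using sf cnj_inner_on[of C s f] by simp
  have "inner_on C (f - s) (f - s) = inner_on C f f - of_real N"
    by (simp add: inner_on_diff_left inner_on_diff_right sf ss fs)
  then show ?thesis
    using Re_inner_on_self_nonneg[of C "f - s"] by (simp add: N_def c_def)
qed

lemma card_orthonormal_le:
  assumes C: "finite C" and G: "finite G"
    and norm: "\<And>i. i \<in> G \<Longrightarrow> inner_on C (u i) (u i) = 1"
    and orth: "\<And>i j. i \<in> G \<Longrightarrow> j \<in> G \<Longrightarrow> i \<noteq> j \<Longrightarrow> inner_on C (u i) (u j) = 0"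
  shows "card G \<le> card C"
proof -
  have "real (card G) = (\<Sum>i\<in>G. Re (inner_on C (u i) (u i)))"
    using norm by simp
  also have "\<dots> = (\<Sum>x\<in>C. \<Sum>i\<in>G. (cmod (inner_on C (u i) (basis_vec x)))\<^sup>2)"
    unfolding Re_inner_on_self using C by (subst sum.swap) simp
  also have "\<dots> \<le> (\<Sum>x\<in>C. Re (inner_on C (basis_vec x) (basis_vec x)))"
    by (intro sum_mono bessel_inequality[OF G norm orth])
  also have "\<dots> = real (card C)"
    using C by simp
  finally show ?thesis by simp
qed

lemma finite_eigenvalues:
  assumes C: "finite C" and A: "hermitian_on C A" "linear_op A"
  shows "finite {\<mu>::real. \<exists>f\<in>supported_on C. f \<noteq> 0 \<and> A f = of_real \<mu> *\<^sub>F f}"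
    (is "finite ?E")
proof -
  have "\<exists>g. inner_on C g g = 1 \<and> A g = of_real \<mu> *\<^sub>F g" if \<mu>: "\<mu> \<in> ?E" for \<mu>
  proof -
    obtain f where f: "f \<in> supported_on C" "f \<noteq> 0" "A f = of_real \<mu> *\<^sub>F f"
      using \<mu> by blast
    obtain c where "inner_on C (c *\<^sub>F f) (c *\<^sub>F f) = 1"
      using normalize_vector[OF C f(1,2)] .
    moreover have "A (c *\<^sub>F f) = of_real \<mu> *\<^sub>F (c *\<^sub>F f)"
      by (simp add: linear_op_scale[OF A(2)] f(3) fun_eq_iff ac_simps)
    ultimately show ?thesis by blast
  qed
  then have "\<forall>\<mu>\<in>?E. \<exists>g. inner_on C g g = 1 \<and> A g = of_real \<mu> *\<^sub>F g" by blast
  from bchoice[OF this] obtain u where u: "\<forall>\<mu>\<in>?E.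
      inner_on C (u \<mu>) (u \<mu>) = 1 \<and> A (u \<mu>) = of_real \<mu> *\<^sub>F u \<mu>"
    by blast
  have "card G \<le> card C" if G: "G \<subseteq> ?E" "finite G" for G
  proof -
    have uG: "inner_on C (u \<mu>) (u \<mu>) = 1" "A (u \<mu>) = of_real \<mu> *\<^sub>F u \<mu>" if "\<mu> \<in> G" for \<mu>
      using bspec[OF u subsetD[OF G(1) that]] by simp_all
    show ?thesis
    proof (rule card_orthonormal_le[OF C G(2)])
      show "inner_on C (u \<mu>) (u \<nu>) = 0" if "\<mu> \<in> G" "\<nu> \<in> G" "\<mu> \<noteq> \<nu>" for \<mu> \<nu>
        using eigenvectors_orthogonal[OF A(1) uG(2)[OF that(1)] uG(2)[OF that(2)] that(3)] .
    qed (rule uG(1))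
  qed
  then have "finite ?E \<and> card ?E \<le> card C"
    by (rule finite_if_finite_subsets_card_bdd)
  then show ?thesis ..
qed

section \<open>Positive operators\<close>

lemma linear_op_sum:
  assumes "linear_op A"
  shows "A (\<Sum>i\<in>I. f i) = (\<Sum>i\<in>I. A (f i))"
proof (induction I rule: infinite_finite_induct)
  case (infinite I)
  then show ?case using linear_op_zero[OF assms] by (metis sum.infinite)
next
  case empty
  then show ?case using linear_op_zero[OF assms] by (metis sum.empty)
next
  case (insert i I)
  then show ?case
    by (simp only: sum.insert[OF insert(1,2)] linear_op_add[OF assms] insert(3))
qed

lemma linear_op_sum_ops:
  assumes "\<And>i. i \<in> I \<Longrightarrow> linear_op (A i)"
  shows "linear_op (\<lambda>f. \<Sum>i\<in>I. A i f)"
  unfolding linear_op_def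
proof (intro conjI allI)
  fix f g c
  have "(\<Sum>i\<in>I. A i (f + g)) = (\<Sum>i\<in>I. A i f + A i g)"
    using linear_op_add[OF assms] by (rule sum.cong[OF refl])
  then show "(\<Sum>i\<in>I. A i (f + g)) = (\<Sum>i\<in>I. A i f) + (\<Sum>i\<in>I. A i g)"
    by (simp add: sum.distrib)
  have "(\<Sum>i\<in>I. A i (c *\<^sub>F f)) = (\<Sum>i\<in>I. c *\<^sub>F A i f)"
    using linear_op_scale[OF assms] by (rule sum.cong[OF refl])
  then show "(\<Sum>i\<in>I. A i (c *\<^sub>F f)) = c *\<^sub>F (\<Sum>i\<in>I. A i f)"
    by (simp add: fun_eq_iff sum_fun_apply sum_distrib_left)
qed

lemma hermitian_on_sum_ops:
  assumes "\<And>i. i \<in> I \<Longrightarrow> hermitian_on C (A i)"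
  shows "hermitian_on C (\<lambda>f. \<Sum>i\<in>I. A i f)"
  unfolding hermitian_on_def inner_on_sum_left inner_on_sum_right
  using hermitian_onD[OF assms] by (intro allI sum.cong[OF refl])

definition positive_on :: "'a set \<Rightarrow> (('a \<Rightarrow> complex) \<Rightarrow> 'a \<Rightarrow> complex) \<Rightarrow> bool" where
  "positive_on C A \<longleftrightarrow> (\<forall>f. Im (inner_on C f (A f)) = 0 \<and> 0 \<le> Re (inner_on C f (A f)))"

lemma positive_onD:
  "positive_on C A \<Longrightarrow> Im (inner_on C f (A f)) = 0"
  "positive_on C A \<Longrightarrow> 0 \<le> Re (inner_on C f (A f))"
  by (simp_all add: positive_on_def)

text \<open>Polarization: the quadratic forms at \<open>f + g\<close> and \<open>f + \<i> g\<close> determine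
  \<open>\<langle>f, A g\<rangle>\<close>.\<close>
lemma positive_on_hermitian:
  assumes pos: "positive_on C A" and lin: "linear_op A"
  shows "hermitian_on C A"
  unfolding hermitian_on_def
proof (intro allI)
  fix f g
  have "Im (inner_on C (f + g) (A (f + g))) = 0"
    and "Im (inner_on C (f + \<i> *\<^sub>F g) (A (f + \<i> *\<^sub>F g))) = 0"
    by (rule positive_onD[OF pos])+
  then have "Im (inner_on C f (A g)) + Im (inner_on C g (A f)) = 0"
    and "Re (inner_on C f (A g)) - Re (inner_on C g (A f)) = 0"
    using positive_onD(1)[OF pos, of f] positive_onD(1)[OF pos, of g]
    by (simp_all add: linear_op_add[OF lin] linear_op_scale[OF lin] inner_on_simps)
  then show "inner_on C f (A g) = inner_on C (A f) g"
    by (simp add: complex_eq_iff cnj_inner_on[of C g "A f", symmetric])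
qed

lemma positive_on_kernel:
  assumes pos: "positive_on C A" and lin: "linear_op A" and f: "inner_on C f (A f) = 0"
  shows "inner_on C g (A f) = 0"
proof -
  have herm: "hermitian_on C A" by (rule positive_on_hermitian[OF pos lin])
  have Re_zero: "Re (inner_on C k (A f)) = 0" for k
  proof (rule nonneg_quadratic_linear_coeff_zero)
    show "0 \<le> Re (inner_on C k (A k))" by (rule positive_onD(2)[OF pos])
    fix t :: real
    show "0 \<le> 2 * t * Re (inner_on C k (A f)) + t\<^sup>2 * Re (inner_on C k (A k))"
      using positive_onD(2)[OF pos, of "f + of_real t *\<^sub>F k"] f
      unfolding Re_quadratic_along_line[OF herm lin] by simp
  qed
  have "Im (inner_on C g (A f)) = Re (inner_on C (\<i> *\<^sub>F g) (A f))"
    by (simp add: inner_on_scale_left)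
  then show ?thesis
    using Re_zero[of g] Re_zero[of "\<i> *\<^sub>F g"] by (simp add: complex_eq_iff)
qed

lemma positive_on_kernel_eq_zero:
  assumes "finite C" "positive_on C A" "linear_op A" "A f \<in> supported_on C"
    and "inner_on C f (A f) = 0"
  shows "A f = 0"
  using positive_on_kernel[OF assms(2,3,5), of "A f"] inner_on_self_eq_zero[OF assms(1,4)] by blast

lemma positive_on_sum_eq_zero_iff:
  assumes C: "finite C" and I: "finite I"
    and pos: "\<And>i. i \<in> I \<Longrightarrow> positive_on C (A i)"
    and lin: "\<And>i. i \<in> I \<Longrightarrow> linear_op (A i)"
    and supp: "\<And>i. i \<in> I \<Longrightarrow> A i f \<in> supported_on C"
  shows "(\<Sum>i\<in>I. A i f) = 0 \<longleftrightarrow> (\<forall>i\<in>I. A i f = 0)"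
proof
  assume "(\<Sum>i\<in>I. A i f) = 0"
  then have "(\<Sum>i\<in>I. inner_on C f (A i f)) = 0"
    by (simp add: inner_on_sum_right[symmetric])
  from arg_cong[OF this, of Re] have "(\<Sum>i\<in>I. Re (inner_on C f (A i f))) = 0"
    by (simp only: Re_sum zero_complex.sel(1))
  moreover have nonneg: "0 \<le> Re (inner_on C f (A i f))" if "i \<in> I" for i
    using positive_onD(2)[OF pos[OF that]] .
  ultimately have "\<forall>i\<in>I. Re (inner_on C f (A i f)) = 0"
    using sum_nonneg_eq_0_iff[OF I nonneg] by simp
  then have "inner_on C f (A i f) = 0" if "i \<in> I" for i
    using positive_onD(1)[OF pos[OF that]] that by (simp add: complex_eq_iff)
  then show "\<forall>i\<in>I. A i f = 0"
    using positive_on_kernel_eq_zero[OF C pos lin supp] by blast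
qed simp

section \<open>Two orthogonal projections\<close>

locale two_subspaces = S1: finite_subspace C S1 + S2: finite_subspace C S2
  for C :: "'a set" and S1 S2 :: "('a \<Rightarrow> complex) set"
begin

definition K :: "('a \<Rightarrow> complex) \<Rightarrow> 'a \<Rightarrow> complex" where
  "K f = orth_proj C S1 (orth_proj C S2 (orth_proj C S1 f))"

definition S1_orth_Int :: "('a \<Rightarrow> complex) set" where
  "S1_orth_Int = S1 \<inter> orth_compl C (S1 \<inter> S2)"

lemma K_in_S1: "K f \<in> S1"
  by (simp add: K_def S1.proj_in)

lemma K_hermitian_on: "hermitian_on C K"
  unfolding K_def by (rule hermitian_on_sandwich[OF S1.proj_hermitian_on S2.proj_hermitian_on])

lemma K_linear_op: "linear_op K"
  unfolding K_def
  by (rule linear_op_compose[OF S1.proj_linear_op linear_op_compose[OF S2.proj_linear_op S1.proj_linear_op]])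

lemma K_quadratic:
  "inner_on C f (K f) = inner_on C (orth_proj C S2 (orth_proj C S1 f)) (orth_proj C S2 (orth_proj C S1 f))"
  unfolding K_def S1.proj_hermitian[of f] S2.proj_quadratic[symmetric] ..

lemma K_quadratic_on_S1: "f \<in> S1 \<Longrightarrow> inner_on C f (K f) = inner_on C f (orth_proj C S2 f)"
  by (simp add: K_def S1.proj_id S1.proj_hermitian[of f])

lemma Re_K_quadratic_bounds:
  "0 \<le> Re (inner_on C f (K f))" "Re (inner_on C f (K f)) \<le> Re (inner_on C f f)"
  unfolding K_quadratic
  using Re_inner_on_self_nonneg S2.proj_norm_le[of "orth_proj C S1 f"] S1.proj_norm_le[of f]
  by auto

lemma K_fixes_Int: "f \<in> S1 \<inter> S2 \<Longrightarrow> K f = f"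
  by (simp add: K_def S1.proj_id S2.proj_id)

text \<open>A fixed point of \<open>K\<close> lies in \<open>S1\<close>, and there \<open>P\<^sub>1 P\<^sub>2 f = f\<close> forces \<open>P\<^sub>2\<close>
  to preserve the norm of \<open>f\<close>.\<close>
lemma fixed_points_K: "{f \<in> supported_on C. K f = f} = S1 \<inter> S2"
proof (intro set_eqI iffI)
  fix f assume "f \<in> {f \<in> supported_on C. K f = f}"
  then have f: "f \<in> supported_on C" "K f = f" by auto
  then have "f \<in> S1" using K_in_S1[of f] by simp
  then have f_eq: "orth_proj C S1 (orth_proj C S2 f) = f"
    using f(2) by (simp add: K_def S1.proj_id)
  have "Re (inner_on C f f) \<le> Re (inner_on C (orth_proj C S2 f) (orth_proj C S2 f))"
    using S1.proj_norm_le[of "orth_proj C S2 f"] by (simp add: f_eq)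
  then have "orth_proj C S2 f = f"
    using S2.proj_norm_le[of f] S2.proj_norm_eq_imp_fixed[OF f(1)] by simp
  then show "f \<in> S1 \<inter> S2" using \<open>f \<in> S1\<close> S2.proj_in[of f] by simp
next
  fix f assume "f \<in> S1 \<inter> S2"
  then show "f \<in> {f \<in> supported_on C. K f = f}"
    using K_fixes_Int subspace_onD(1)[OF S1.subspace] by auto
qed

lemma S1_orth_Int_subspace: "subspace_on C S1_orth_Int"
  unfolding S1_orth_Int_def by (rule subspace_on_Int_orth_compl[OF S1.subspace])

lemma K_maps_S1_orth_Int:
  assumes "f \<in> S1_orth_Int"
  shows "K f \<in> S1_orth_Int"
proof -
  have "inner_on C g (K f) = 0" if "g \<in> S1 \<inter> S2" for g
    using hermitian_onD[OF K_hermitian_on, of g f] K_fixes_Int[OF that] assms that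
    by (simp add: S1_orth_Int_def orth_compl_def)
  then show ?thesis using K_in_S1 by (simp add: S1_orth_Int_def orth_compl_def)
qed

lemma eigenvector_K_in_S1_orth_Int:
  assumes "K f = of_real \<mu> *\<^sub>F f" "\<mu> \<noteq> 0" "\<mu> \<noteq> 1"
  shows "f \<in> S1_orth_Int"
proof -
  have eq: "of_real (1 / \<mu>) *\<^sub>F K f = f"
    using assms(1,2) by (simp add: fun_eq_iff)
  have "of_real (1 / \<mu>) *\<^sub>F K f \<in> S1"
    by (rule subspace_onD(4)[OF S1.subspace K_in_S1])
  then have "f \<in> S1" unfolding eq .
  moreover have "inner_on C g f = 0" if "g \<in> S1 \<inter> S2" for g
    using eigenvectors_orthogonal[OF K_hermitian_on _ assms(1), of g 1] K_fixes_Int[OF that] assms(3)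
    by simp
  ultimately show ?thesis by (simp add: S1_orth_Int_def orth_compl_def)
qed

lemma eigenvalue_K_attained:
  assumes "f \<in> supported_on C" "f \<noteq> 0" "K f = of_real \<mu> *\<^sub>F f" "\<mu> \<noteq> 0" "\<mu> \<noteq> 1"
  shows "\<exists>g\<in>S1_orth_Int. inner_on C g g = 1 \<and> Re (inner_on C g (orth_proj C S2 g)) = \<mu>"
proof -
  obtain c where c: "inner_on C (c *\<^sub>F f) (c *\<^sub>F f) = 1"
    using normalize_vector[OF S1.finite_carrier assms(1,2)] .
  have g: "c *\<^sub>F f \<in> S1_orth_Int"
    using subspace_onD(4)[OF S1_orth_Int_subspace eigenvector_K_in_S1_orth_Int[OF assms(3-5)]] .
  have "K (c *\<^sub>F f) = c *\<^sub>F K f"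
    by (rule linear_op_scale[OF K_linear_op])
  also have "\<dots> = of_real \<mu> *\<^sub>F (c *\<^sub>F f)"
    by (simp add: assms(3) fun_eq_iff mult.left_commute)
  finally have "Re (inner_on C (c *\<^sub>F f) (K (c *\<^sub>F f))) = \<mu>"
    using c by (simp add: inner_on_scale_right)
  then have "Re (inner_on C (c *\<^sub>F f) (orth_proj C S2 (c *\<^sub>F f))) = \<mu>"
    using K_quadratic_on_S1[of "c *\<^sub>F f"] g by (simp add: S1_orth_Int_def)
  then show ?thesis using g c by blast
qed

lemma quadratic_maximizer_exists:
  assumes "S1_orth_Int \<inter> {f. inner_on C f f = 1} \<noteq> {}"
  obtains u where "u \<in> S1_orth_Int" "inner_on C u u = 1"
    "\<And>f. f \<in> S1_orth_Int \<Longrightarrow> inner_on C f f = 1 \<Longrightarrow>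
       Re (inner_on C f (orth_proj C S2 f)) \<le> Re (inner_on C u (orth_proj C S2 u))"
proof -
  let ?X = "S1_orth_Int \<inter> {f. inner_on C f f = 1}"
  have "closed ?X"
    unfolding S1_orth_Int_def
    by (intro closed_Int S1.closed_subspace closed_orth_compl closed_unit_sphere)
  then have "compact ?X"
    using subspace_onD(1)[OF S1.subspace] S1.finite_carrier
    by (intro compact_unit_vectors) (auto simp: S1_orth_Int_def)
  moreover have "continuous_on ?X (\<lambda>f. Re (inner_on C f (orth_proj C S2 f)))"
    by (rule continuous_on_Re, rule continuous_on_inner_on)
      (rule continuous_on_fun_apply, rule S2.continuous_on_proj)
  ultimately show ?thesis
    using continuous_attains_sup[OF _ assms] that by blast
qed

lemma quadratic_maximizer_eigenvalue:
  assumes u: "u \<in> S1_orth_Int" "inner_on C u u = 1"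
    and max: "\<And>f. f \<in> S1_orth_Int \<Longrightarrow> inner_on C f f = 1 \<Longrightarrow>
                Re (inner_on C f (orth_proj C S2 f)) \<le> Re (inner_on C u (orth_proj C S2 u))"
  defines "l \<equiv> Re (inner_on C u (orth_proj C S2 u))"
  shows "l < 1" "u \<in> supported_on C" "u \<noteq> 0" "K u = of_real l *\<^sub>F u"
proof -
  have quad: "inner_on C f (K f) = inner_on C f (orth_proj C S2 f)" if "f \<in> S1_orth_Int" for f
    using K_quadratic_on_S1 that by (simp add: S1_orth_Int_def)
  show K_u: "K u = of_real l *\<^sub>F u"
    using rayleigh_maximizer_eigenvector[OF S1.finite_carrier S1_orth_Int_subspace
        K_hermitian_on K_linear_op K_maps_S1_orth_Int u] max quad u(1)
    unfolding l_def by simp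
  show "u \<in> supported_on C"
    using u(1) subspace_onD(1)[OF S1.subspace] by (auto simp: S1_orth_Int_def)
  show "u \<noteq> 0" using u(2) by auto
  have "l \<le> 1"
    using Re_K_quadratic_bounds(2)[of u] quad[OF u(1)] u(2) by (simp add: l_def)
  moreover have "l \<noteq> 1"
  proof
    assume "l = 1"
    then have "u \<in> S1 \<inter> S2"
      using fixed_points_K K_u \<open>u \<in> supported_on C\<close> by auto
    then have "inner_on C u u = 0"
      using u(1) by (simp add: S1_orth_Int_def orth_compl_def)
    then show False using u(2) by simp
  qed
  ultimately show "l < 1" by simp
qed

theorem Sup_quadratic_eq_Max_eigenvalue:
  assumes "\<exists>\<mu><1. \<exists>f\<in>supported_on C. f \<noteq> 0 \<and> K f = of_real \<mu> *\<^sub>F f"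
  shows "Sup (insert 0 {Re (inner_on C f (orth_proj C S2 f)) | f.
            f \<in> S1 \<and> (\<forall>g\<in>S1 \<inter> S2. inner_on C g f = 0) \<and> inner_on C f f = 1})
       = Max {\<mu>. \<mu> < 1 \<and> (\<exists>f\<in>supported_on C. f \<noteq> 0 \<and> K f = of_real \<mu> *\<^sub>F f)}"
    (is "Sup (insert 0 ?Q) = Max ?E")
proof -
  have Q: "?Q = (\<lambda>f. Re (inner_on C f (orth_proj C S2 f))) ` (S1_orth_Int \<inter> {f. inner_on C f f = 1})"
    by (auto simp: S1_orth_Int_def orth_compl_def)
  have "finite ?E"
    by (rule finite_subset[OF _ finite_eigenvalues[OF S1.finite_carrier K_hermitian_on K_linear_op]])
      auto
  have E_in_Q: "\<mu> \<in> ?Q" if "\<mu> \<in> ?E" "\<mu> \<noteq> 0" for \<mu>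
    using that eigenvalue_K_attained unfolding Q by fastforce
  show ?thesis
  proof (cases "?Q = {}")
    case True
    then have "?E = {0}" using E_in_Q assms by blast
    then show ?thesis unfolding True by simp
  next
    case False
    then obtain u where u: "u \<in> S1_orth_Int" "inner_on C u u = 1"
      and max: "\<And>f. f \<in> S1_orth_Int \<Longrightarrow> inner_on C f f = 1 \<Longrightarrow>
                  Re (inner_on C f (orth_proj C S2 f)) \<le> Re (inner_on C u (orth_proj C S2 u))"
      using quadratic_maximizer_exists unfolding Q by blast
    let ?l = "Re (inner_on C u (orth_proj C S2 u))"
    have l_E: "?l \<in> ?E"
      using quadratic_maximizer_eigenvalue[OF u max] by blast
    have l_nonneg: "0 \<le> ?l"
      using Re_K_quadratic_bounds(1)[of u] K_quadratic_on_S1[of u] u(1)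
      by (simp add: S1_orth_Int_def)
    have "\<mu> \<le> ?l" if "\<mu> \<in> ?E" for \<mu>
      using E_in_Q[OF that] max l_nonneg unfolding Q by (cases "\<mu> = 0") auto
    then have "Max ?E = ?l"
      using Max_eqI[OF \<open>finite ?E\<close> _ l_E] by blast
    moreover have "Sup (insert 0 ?Q) = ?l"
      using u max l_nonneg unfolding Q by (intro cSup_eq_maximum) auto
    ultimately show ?thesis by simp
  qed
qed

end

section \<open>Nearest-neighbour Hamiltonians on the chain\<close>

lemma finite_confs: "finite (confs d a b)"
proof -
  have "confs d a b = {f. \<forall>x. (x \<in> {a..b} \<longrightarrow> f x \<in> {..<d}) \<and> (x \<notin> {a..b} \<longrightarrow> f x = 0)}"
    by (auto simp: Defs.confs_def)
  then show ?thesis using finite_set_of_finite_funs[of "{a..b}" "{..<d}" 0] by simp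
qed

lemma vecs_eq_supported_on: "vecs d a b = supported_on (confs d a b)"
  by (simp add: Defs.vecs_def supported_on_def)

lemma inner_prod_eq_inner_on: "inner_prod d a b = inner_on (confs d a b)"
  by (simp add: Defs.inner_prod_def inner_on_def fun_eq_iff)

lemma Gproj_eq_orth_proj: "Gproj d a b h c e = orth_proj (confs d a b) (kerH d a b h c e)"
  by (simp add: Defs.Gproj_def Defs.proj_def orth_proj_def inner_prod_eq_inner_on fun_diff_def
      fun_eq_iff)

lemma zero_vec_eq_0: "zero_vec = 0"
  by (simp add: Defs.zero_vec_def zero_fun_def)

definition two_site_form ::
  "nat \<Rightarrow> (nat \<Rightarrow> nat \<Rightarrow> nat \<Rightarrow> nat \<Rightarrow> complex) \<Rightarrow> (nat \<Rightarrow> nat \<Rightarrow> complex) \<Rightarrow> (nat \<Rightarrow> nat \<Rightarrow> complex) \<Rightarrow> complex"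
  where "two_site_form d h u v = (\<Sum>i<d. \<Sum>j<d. \<Sum>k<d. \<Sum>l<d. cnj (u i j) * h i j k l * v k l)"

lemma positive_two_site_form:
  assumes "positive_two_site d h"
  shows "Im (two_site_form d h v v) = 0" "0 \<le> Re (two_site_form d h v v)"
  using assms by (simp_all add: Defs.positive_two_site_def two_site_form_def Let_def)

definition pair_slice :: "(config \<Rightarrow> complex) \<Rightarrow> int \<Rightarrow> config \<Rightarrow> nat \<Rightarrow> nat \<Rightarrow> complex" where
  "pair_slice \<psi> x \<tau> = (\<lambda>i j. \<psi> (\<tau>(x := i, x + 1 := j)))"

lemma fun_upd_pair_in_confs:
  assumes "a \<le> x" "x + 1 \<le> b" "\<sigma> \<in> confs d a b" "k < d" "l < d"
  shows "\<sigma>(x := k, x + 1 := l) \<in> confs d a b"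
  using assms by (auto simp: Defs.confs_def)

lemma fun_upd_pair_twice:
  "(x :: int) \<noteq> y \<Longrightarrow> (\<tau>(x := i, y := j))(x := k, y := l) = \<tau>(x := k, y := l)"
  by (auto simp: fun_eq_iff)

lemma sum_confs_pair_split:
  assumes "a \<le> x" "x + 1 \<le> b"
  shows "(\<Sum>\<sigma>\<in>confs d a b. f \<sigma>) =
    (\<Sum>\<tau>\<in>{\<tau>\<in>confs d a b. \<tau> x = 0 \<and> \<tau> (x + 1) = 0}. \<Sum>i<d. \<Sum>j<d. f (\<tau>(x := i, x + 1 := j)))"
proof -
  let ?C0 = "{\<tau>\<in>confs d a b. \<tau> x = 0 \<and> \<tau> (x + 1) = 0}"
  have "(\<Sum>\<tau>\<in>?C0. \<Sum>i<d. \<Sum>j<d. f (\<tau>(x := i, x + 1 := j)))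
      = (\<Sum>q\<in>?C0 \<times> ({..<d} \<times> {..<d}). f ((fst q)(x := fst (snd q), x + 1 := snd (snd q))))"
    by (simp add: sum.cartesian_product split_def)
  also have "\<dots> = (\<Sum>\<sigma>\<in>confs d a b. f \<sigma>)"
    apply (rule sum.reindex_bij_witness[where i = "\<lambda>\<sigma>. (\<sigma>(x := 0, x + 1 := 0), \<sigma> x, \<sigma> (x + 1))"
        and j = "\<lambda>q. (fst q)(x := fst (snd q), x + 1 := snd (snd q))"])
    subgoal for q by (cases q) (auto simp: fun_eq_iff)
    subgoal for q using fun_upd_pair_in_confs[OF assms] by (cases q) auto
    subgoal for \<sigma> by (auto simp: fun_eq_iff)
    subgoal for \<sigma> using fun_upd_pair_in_confs[OF assms, of \<sigma> 0 0] assms by (auto simp: Defs.confs_def)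
    subgoal by simp
    done
  finally show ?thesis by simp
qed

lemma inner_on_hloc:
  assumes "a \<le> x" "x + 1 \<le> b"
  shows "inner_on (confs d a b) \<phi> (hloc d a b h x \<psi>) =
    (\<Sum>\<tau>\<in>{\<tau>\<in>confs d a b. \<tau> x = 0 \<and> \<tau> (x + 1) = 0}.
       two_site_form d h (pair_slice \<phi> x \<tau>) (pair_slice \<psi> x \<tau>))"
proof -
  have "inner_on (confs d a b) \<phi> (hloc d a b h x \<psi>) = (\<Sum>\<sigma>\<in>confs d a b. cnj (\<phi> \<sigma>) *
      (\<Sum>k<d. \<Sum>l<d. h (\<sigma> x) (\<sigma> (x + 1)) k l * \<psi> (\<sigma>(x := k, x + 1 := l))))"
    unfolding inner_on_def by (intro sum.cong refl) (simp add: Defs.hloc_def)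
  also have "\<dots> = (\<Sum>\<tau>\<in>{\<tau>\<in>confs d a b. \<tau> x = 0 \<and> \<tau> (x + 1) = 0}.
       two_site_form d h (pair_slice \<phi> x \<tau>) (pair_slice \<psi> x \<tau>))"
    unfolding sum_confs_pair_split[OF assms] two_site_form_def pair_slice_def
    by (simp add: fun_upd_pair_twice sum_distrib_left mult.assoc)
  finally show ?thesis .
qed

lemma hloc_in_confs:
  "\<sigma> \<in> confs d a b \<Longrightarrow> hloc d a b h x \<psi> \<sigma> =
     (\<Sum>k<d. \<Sum>l<d. h (\<sigma> x) (\<sigma> (x + 1)) k l * \<psi> (\<sigma>(x := k, x + 1 := l)))"
  by (simp add: Defs.hloc_def)

lemma hloc_outside_confs: "\<sigma> \<notin> confs d a b \<Longrightarrow> hloc d a b h x \<psi> \<sigma> = 0"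
  by (simp add: Defs.hloc_def)

lemma hloc_linear_op: "linear_op (hloc d a b h x)"
  by (simp add: linear_op_def Defs.hloc_def fun_eq_iff distrib_left sum.distrib sum_distrib_left
      mult.left_commute)

lemma hloc_supported: "hloc d a b h x \<psi> \<in> supported_on (confs d a b)"
  by (simp add: supported_on_def Defs.hloc_def)

lemma hloc_positive_on:
  assumes "positive_two_site d h" "a \<le> x" "x + 1 \<le> b"
  shows "positive_on (confs d a b) (hloc d a b h x)"
  unfolding positive_on_def inner_on_hloc[OF assms(2,3)]
  using positive_two_site_form[OF assms(1)] by (simp add: sum_nonneg)

lemma Hint_eq_sum: "Hint d a b h c e = (\<lambda>\<psi>. \<Sum>x\<in>{c..<e}. hloc d a b h x \<psi>)"
  by (simp add: Defs.Hint_def fun_eq_iff sum_fun_apply)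

lemma Hint_linear_op: "linear_op (Hint d a b h c e)"
  unfolding Hint_eq_sum by (rule linear_op_sum_ops[OF hloc_linear_op])

lemma Hint_hermitian_on:
  assumes "positive_two_site d h" "a \<le> c" "e \<le> b"
  shows "hermitian_on (confs d a b) (Hint d a b h c e)"
  unfolding Hint_eq_sum
  using assms by (intro hermitian_on_sum_ops positive_on_hermitian hloc_positive_on hloc_linear_op) auto

lemma kerH_eq: "kerH d a b h c e = {\<psi> \<in> supported_on (confs d a b). Hint d a b h c e \<psi> = 0}"
  by (simp add: Defs.kerH_def vecs_eq_supported_on zero_vec_eq_0)

lemma kerH_finite_subspace: "finite_subspace (confs d a b) (kerH d a b h c e)"
proof
  show "finite (confs d a b)" by (rule finite_confs)
  show "subspace_on (confs d a b) (kerH d a b h c e)"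
    unfolding subspace_on_def kerH_eq
    by (auto simp: linear_op_add[OF Hint_linear_op] linear_op_scale[OF Hint_linear_op]
        linear_op_zero[OF Hint_linear_op] supported_on_def)
qed

lemma kerH_iff:
  assumes "positive_two_site d h" "a \<le> c" "e \<le> b"
  shows "\<psi> \<in> kerH d a b h c e \<longleftrightarrow>
    \<psi> \<in> supported_on (confs d a b) \<and> (\<forall>x\<in>{c..<e}. hloc d a b h x \<psi> = 0)"
proof -
  have "(\<Sum>x\<in>{c..<e}. hloc d a b h x \<psi>) = 0 \<longleftrightarrow> (\<forall>x\<in>{c..<e}. hloc d a b h x \<psi> = 0)"
    using assms
    by (intro positive_on_sum_eq_zero_iff[OF finite_confs[of d a b]] hloc_positive_on hloc_linear_op
        hloc_supported) auto
  then show ?thesis by (simp add: kerH_eq Hint_eq_sum)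
qed

lemma sum_swap_double:
  "(\<Sum>k\<in>A. \<Sum>l\<in>B. \<Sum>k'\<in>C. \<Sum>l'\<in>D. f k l k' l') = (\<Sum>k'\<in>C. \<Sum>l'\<in>D. \<Sum>k\<in>A. \<Sum>l\<in>B. f k l k' l')"
proof -
  have "(\<Sum>k\<in>A. \<Sum>l\<in>B. \<Sum>k'\<in>C. \<Sum>l'\<in>D. f k l k' l') = (\<Sum>k\<in>A. \<Sum>k'\<in>C. \<Sum>l\<in>B. \<Sum>l'\<in>D. f k l k' l')"
    by (intro sum.cong refl) (rule sum.swap)
  also have "\<dots> = (\<Sum>k'\<in>C. \<Sum>k\<in>A. \<Sum>l'\<in>D. \<Sum>l\<in>B. f k l k' l')"
    by (subst sum.swap) (intro sum.cong refl sum.swap)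
  also have "\<dots> = (\<Sum>k'\<in>C. \<Sum>l'\<in>D. \<Sum>k\<in>A. \<Sum>l\<in>B. f k l k' l')"
    by (intro sum.cong refl) (rule sum.swap)
  finally show ?thesis .
qed

lemma hloc_commute:
  assumes "a \<le> x" "x + 1 \<le> b" "a \<le> y" "y + 1 \<le> b" "y + 1 < x"
  shows "hloc d a b h x (hloc d a b h y \<psi>) = hloc d a b h y (hloc d a b h x \<psi>)"
proof
  fix \<sigma>
  show "hloc d a b h x (hloc d a b h y \<psi>) \<sigma> = hloc d a b h y (hloc d a b h x \<psi>) \<sigma>"
  proof (cases "\<sigma> \<in> confs d a b")
    case False
    then show ?thesis by (simp add: hloc_outside_confs)
  next
    case True
    let ?h = "\<lambda>z. h (\<sigma> z) (\<sigma> (z + 1))"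
    have upd: "\<sigma>(x := k, x + 1 := l, y := k', y + 1 := l') = \<sigma>(y := k', y + 1 := l', x := k, x + 1 := l)"
      for k l k' l' using assms(5) by (auto simp: fun_eq_iff)
    have "hloc d a b h x (hloc d a b h y \<psi>) \<sigma> =
      (\<Sum>k<d. \<Sum>l<d. \<Sum>k'<d. \<Sum>l'<d. ?h x k l * (?h y k' l' *
          \<psi> (\<sigma>(x := k, x + 1 := l, y := k', y + 1 := l'))))"
      unfolding hloc_in_confs[OF True]
      by (intro sum.cong refl)
        (simp add: hloc_in_confs[OF fun_upd_pair_in_confs[OF assms(1,2) True]] sum_distrib_left,
          use assms(5) in auto)
    also have "\<dots> = (\<Sum>k'<d. \<Sum>l'<d. \<Sum>k<d. \<Sum>l<d. ?h y k' l' * (?h x k l *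
          \<psi> (\<sigma>(y := k', y + 1 := l', x := k, x + 1 := l))))"
      unfolding upd sum_swap_double[where f = "\<lambda>k l k' l'. ?h x k l * (?h y k' l' *
          \<psi> (\<sigma>(y := k', y + 1 := l', x := k, x + 1 := l)))"]
      by (simp add: mult.left_commute)
    also have "\<dots> = hloc d a b h y (hloc d a b h x \<psi>) \<sigma>"
      unfolding hloc_in_confs[OF True]
      by (intro sum.cong refl)
        (simp add: hloc_in_confs[OF fun_upd_pair_in_confs[OF assms(3,4) True]] sum_distrib_left,
          use assms(5) in auto)
    finally show ?thesis .
  qed
qed

lemma Hint_supported: "Hint d a b h c e \<psi> \<in> supported_on (confs d a b)"
  by (simp add: Defs.Hint_def supported_on_def hloc_outside_confs)

section \<open>Splitting the chain at the origin\<close>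

definition join :: "config \<Rightarrow> config \<Rightarrow> config" where
  "join \<beta> \<rho> = (\<lambda>x. if x \<le> 0 then \<beta> x else \<rho> x)"

definition left_slice :: "nat \<Rightarrow> int \<Rightarrow> (config \<Rightarrow> complex) \<Rightarrow> config \<Rightarrow> config \<Rightarrow> complex" where
  "left_slice d a \<phi> \<rho> = (\<lambda>\<beta>. if \<beta> \<in> confs d a 0 then \<phi> (join \<beta> \<rho>) else 0)"

definition right_slice :: "nat \<Rightarrow> int \<Rightarrow> (config \<Rightarrow> complex) \<Rightarrow> config \<Rightarrow> config \<Rightarrow> complex" where
  "right_slice d b \<phi> \<alpha> = (\<lambda>\<rho>. if \<rho> \<in> confs d 1 b then \<phi> (join \<alpha> \<rho>) else 0)"

locale split_chain =
  fixes d :: nat and h :: "nat \<Rightarrow> nat \<Rightarrow> nat \<Rightarrow> nat \<Rightarrow> complex" and a b :: int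
  assumes positive: "positive_two_site d h" and left_end: "a \<le> 0" and right_end: "1 \<le> b"
begin

sublocale two_subspaces "confs d a b" "kerH d a b h a 0" "kerH d a b h 0 b"
  by (intro two_subspaces.intro kerH_finite_subspace)

lemma join_in_confs: "\<beta> \<in> confs d a 0 \<Longrightarrow> \<rho> \<in> confs d 1 b \<Longrightarrow> join \<beta> \<rho> \<in> confs d a b"
  using left_end right_end by (auto simp: Defs.confs_def join_def)

lemma join_restr:
  assumes "\<sigma> \<in> confs d a b"
  shows "restr a 0 \<sigma> \<in> confs d a 0" "restr 1 b \<sigma> \<in> confs d 1 b"
    "join (restr a 0 \<sigma>) (restr 1 b \<sigma>) = \<sigma>"
  using assms left_end right_end by (auto simp: Defs.confs_def join_def Defs.restr_def fun_eq_iff)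

lemma Hint_left_slice:
  assumes "\<beta> \<in> confs d a 0" "\<rho> \<in> confs d 1 b"
  shows "Hint d a 0 h a 0 (left_slice d a \<phi> \<rho>) \<beta> = Hint d a b h a 0 \<phi> (join \<beta> \<rho>)"
proof -
  have "hloc d a 0 h x (left_slice d a \<phi> \<rho>) \<beta> = hloc d a b h x \<phi> (join \<beta> \<rho>)"
    if "a \<le> x" "x < 0" for x
  proof -
    have "(join \<beta> \<rho>)(x := k, x + 1 := l) = join (\<beta>(x := k, x + 1 := l)) \<rho>" for k l
      using that by (auto simp: join_def fun_eq_iff)
    moreover have "join \<beta> \<rho> x = \<beta> x" "join \<beta> \<rho> (x + 1) = \<beta> (x + 1)"
      using that by (simp_all add: join_def)
    ultimately show ?thesis
      using that fun_upd_pair_in_confs[OF that(1) _ assms(1)]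
      by (simp add: hloc_in_confs assms join_in_confs left_slice_def)
  qed
  then show ?thesis by (simp add: Defs.Hint_def)
qed

lemma Hint_right_slice:
  assumes "\<alpha> \<in> confs d a 0" "\<rho> \<in> confs d 1 b"
  shows "Hint d 1 b h 1 b (right_slice d b \<phi> \<alpha>) \<rho> = Hint d a b h 1 b \<phi> (join \<alpha> \<rho>)"
proof -
  have "hloc d 1 b h x (right_slice d b \<phi> \<alpha>) \<rho> = hloc d a b h x \<phi> (join \<alpha> \<rho>)"
    if "1 \<le> x" "x < b" for x
  proof -
    have "(join \<alpha> \<rho>)(x := k, x + 1 := l) = join \<alpha> (\<rho>(x := k, x + 1 := l))" for k l
      using that by (auto simp: join_def fun_eq_iff)
    moreover have "join \<alpha> \<rho> x = \<rho> x" "join \<alpha> \<rho> (x + 1) = \<rho> (x + 1)"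
      using that by (simp_all add: join_def)
    ultimately show ?thesis
      using that fun_upd_pair_in_confs[OF that(1) _ assms(2)]
      by (simp add: hloc_in_confs assms join_in_confs right_slice_def)
  qed
  then show ?thesis by (simp add: Defs.Hint_def)
qed

lemma left_slice_in_kerH:
  assumes "\<rho> \<in> confs d 1 b" "\<phi> \<in> kerH d a b h a 0"
  shows "left_slice d a \<phi> \<rho> \<in> kerH d a 0 h a 0"
proof -
  have "Hint d a 0 h a 0 (left_slice d a \<phi> \<rho>) \<beta> = 0" for \<beta>
    using Hint_supported[of d a 0 h a 0 "left_slice d a \<phi> \<rho>"] Hint_left_slice[OF _ assms(1)] assms(2)
    by (cases "\<beta> \<in> confs d a 0") (auto simp: supported_on_def kerH_eq)
  then show ?thesis
    by (auto simp: kerH_eq supported_on_def left_slice_def)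
qed

lemma right_slice_in_kerH:
  assumes "\<alpha> \<in> confs d a 0" "\<phi> \<in> kerH d a b h 1 b"
  shows "right_slice d b \<phi> \<alpha> \<in> kerH d 1 b h 1 b"
proof -
  have "Hint d 1 b h 1 b (right_slice d b \<phi> \<alpha>) \<rho> = 0" for \<rho>
    using Hint_supported[of d 1 b h 1 b "right_slice d b \<phi> \<alpha>"] Hint_right_slice[OF assms(1)] assms(2)
    by (cases "\<rho> \<in> confs d 1 b") (auto simp: supported_on_def kerH_eq)
  then show ?thesis
    by (auto simp: kerH_eq supported_on_def right_slice_def)
qed

lemma kerH_whole_eq_Int: "kerH d a b h a b = kerH d a b h a 0 \<inter> kerH d a b h 0 b"
proof -
  have "{a..<b} = {a..<0} \<union> {0..<b}" using left_end right_end by auto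
  then show ?thesis
    using left_end right_end by (auto simp: kerH_iff[OF positive])
qed

lemma kerH_right_subset: "kerH d a b h 0 b \<subseteq> kerH d a b h 1 b"
  using left_end by (auto simp: kerH_iff[OF positive])

lemma Hint_right_maps_kerH_left:
  assumes "\<phi> \<in> kerH d a b h a 0"
  shows "Hint d a b h 1 b \<phi> \<in> kerH d a b h a 0"
proof -
  have vanish: "hloc d a b h y \<phi> = 0" if "y \<in> {a..<0}" for y
    using assms that right_end by (simp add: kerH_iff[OF positive])
  have "hloc d a b h y (Hint d a b h 1 b \<phi>) = 0" if "y \<in> {a..<0}" for y
  proof -
    have "hloc d a b h y (Hint d a b h 1 b \<phi>) = (\<Sum>x\<in>{1..<b}. hloc d a b h y (hloc d a b h x \<phi>))"
      by (simp add: Hint_eq_sum linear_op_sum[OF hloc_linear_op])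
    also have "\<dots> = (\<Sum>x\<in>{1..<b}. hloc d a b h x (hloc d a b h y \<phi>))"
      using that left_end by (intro sum.cong refl hloc_commute[symmetric]) auto
    also have "\<dots> = 0"
      by (simp add: vanish[OF that] linear_op_zero[OF hloc_linear_op])
    finally show ?thesis .
  qed
  then show ?thesis
    using right_end by (simp add: kerH_iff[OF positive] Hint_supported)
qed

lemma proj_left_preserves_kerH_right:
  assumes "\<phi> \<in> kerH d a b h 1 b"
  shows "orth_proj (confs d a b) (kerH d a b h a 0) \<phi> \<in> kerH d a b h 1 b"
proof -
  have "Hint d a b h 1 b (orth_proj (confs d a b) (kerH d a b h a 0) \<phi>)
      = orth_proj (confs d a b) (kerH d a b h a 0) (Hint d a b h 1 b \<phi>)"
    using left_end by (intro S1.proj_commute[symmetric] Hint_hermitian_on[OF positive]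
        Hint_linear_op Hint_right_maps_kerH_left) auto
  also have "\<dots> = 0"
    using assms S1.proj_zero by (simp add: kerH_eq[of d a b h 1 b])
  finally show ?thesis
    unfolding kerH_eq[of d a b h 1 b] using S1.proj_supported by simp
qed

lemma K_in_kerH_left_right: "K f \<in> kerH d a b h a 0 \<inter> kerH d a b h 1 b"
  using K_in_S1 proj_left_preserves_kerH_right kerH_right_subset S2.proj_in
  unfolding K_def by blast

text \<open>Expanding the left factor in the basis \<open>P' e\<^sub>\<alpha>\<close>, where \<open>P'\<close> projects onto the
  ground states of \<open>[a, 0]\<close>, writes \<open>\<phi>\<close> as a sum of product vectors.\<close>
lemma kerH_left_tensor_expansion:
  assumes "\<phi> \<in> kerH d a b h a 0"
  shows "\<phi> = (\<Sum>\<alpha>\<in>confs d a 0.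
    tens d a 0 b (orth_proj (confs d a 0) (kerH d a 0 h a 0) (basis_vec \<alpha>)) (right_slice d b \<phi> \<alpha>))"
    (is "\<phi> = (\<Sum>\<alpha>\<in>_. tens d a 0 b (?P (basis_vec \<alpha>)) _)")
proof
  interpret L: finite_subspace "confs d a 0" "kerH d a 0 h a 0"
    by (rule kerH_finite_subspace)
  fix \<sigma>
  show "\<phi> \<sigma> = (\<Sum>\<alpha>\<in>confs d a 0. tens d a 0 b (?P (basis_vec \<alpha>)) (right_slice d b \<phi> \<alpha>)) \<sigma>"
  proof (cases "\<sigma> \<in> confs d a b")
    case False
    then show ?thesis
      using assms by (simp add: sum_fun_apply Defs.tens_def kerH_eq supported_on_def)
  next
    case True
    define \<beta> \<rho> where "\<beta> = restr a 0 \<sigma>" and "\<rho> = restr 1 b \<sigma>"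
    have \<beta>: "\<beta> \<in> confs d a 0" and \<rho>: "\<rho> \<in> confs d 1 b" and \<sigma>: "join \<beta> \<rho> = \<sigma>"
      using join_restr[OF True] unfolding \<beta>_def \<rho>_def by auto
    have slice: "left_slice d a \<phi> \<rho> \<in> kerH d a 0 h a 0"
      by (rule left_slice_in_kerH[OF \<rho> assms])
    have "\<phi> \<sigma> = left_slice d a \<phi> \<rho> \<beta>"
      using \<beta> \<sigma> by (simp add: left_slice_def)
    also have "\<dots> = ?P (left_slice d a \<phi> \<rho>) \<beta>"
      by (simp add: L.proj_id[OF slice])
    also have "\<dots> = (\<Sum>\<alpha>\<in>confs d a 0. left_slice d a \<phi> \<rho> \<alpha> * ?P (basis_vec \<alpha>) \<beta>)"
      by (subst L.proj_expansion) (simp add: sum_fun_apply)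
    also have "\<dots> = (\<Sum>\<alpha>\<in>confs d a 0. tens d a 0 b (?P (basis_vec \<alpha>)) (right_slice d b \<phi> \<alpha>) \<sigma>)"
      using True \<rho> by (intro sum.cong refl)
        (simp add: Defs.tens_def left_slice_def right_slice_def \<beta>_def[symmetric] \<rho>_def[symmetric])
    finally show ?thesis by (simp add: sum_fun_apply)
  qed
qed

lemma kerH_left_right_subset_tensor:
  assumes "\<phi> \<in> kerH d a b h a 0" "\<phi> \<in> kerH d a b h 1 b"
  shows "\<phi> \<in> tensor_sub d a 0 b (kerH d a 0 h a 0) (kerH d 1 b h 1 b)"
proof -
  let ?P = "orth_proj (confs d a 0) (kerH d a 0 h a 0)"
  let ?N = "card (confs d a 0)"
  obtain g where g: "bij_betw g {..<?N} (confs d a 0)"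
    using ex_bij_betw_nat_finite[OF finite_confs] atLeast0LessThan by metis
  have "\<phi> = (\<Sum>\<alpha>\<in>confs d a 0. tens d a 0 b (?P (basis_vec \<alpha>)) (right_slice d b \<phi> \<alpha>))"
    by (rule kerH_left_tensor_expansion[OF assms(1)])
  also have "\<dots> = (\<Sum>i<?N. tens d a 0 b (?P (basis_vec (g i))) (right_slice d b \<phi> (g i)))"
    by (rule sum.reindex_bij_betw[OF g, symmetric])
  also have "\<dots> = (\<lambda>\<sigma>. \<Sum>i<?N. 1 * tens d a 0 b (?P (basis_vec (g i))) (right_slice d b \<phi> (g i)) \<sigma>)"
    by (simp add: fun_eq_iff sum_fun_apply)
  finally have eq: "\<phi> = (\<lambda>\<sigma>. \<Sum>i<?N. 1 * tens d a 0 b (?P (basis_vec (g i))) (right_slice d b \<phi> (g i)) \<sigma>)" .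
  have mem: "\<forall>i<?N. ?P (basis_vec (g i)) \<in> kerH d a 0 h a 0 \<and>
      right_slice d b \<phi> (g i) \<in> kerH d 1 b h 1 b"
    using finite_subspace.proj_in[OF kerH_finite_subspace] right_slice_in_kerH[OF _ assms(2)]
      bij_betwE[OF g] by blast
  show ?thesis
    unfolding Defs.tensor_sub_def mem_Collect_eq
    by (rule exI[of _ ?N], rule exI[of _ "\<lambda>_. 1"], rule exI[of _ "\<lambda>i. ?P (basis_vec (g i))"],
        rule exI[of _ "\<lambda>i. right_slice d b \<phi> (g i)"]) (rule conjI[OF mem eq])
qed

end

theorem lemma3p2:
  fixes d :: nat and h :: "nat \<Rightarrow> nat \<Rightarrow> nat \<Rightarrow> nat \<Rightarrow> complex" and m n :: nat
  assumes "positive_two_site d h"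
    and "frustration_free d h"
    and "m \<ge> 1" and "n \<ge> 1"
  shows "(\<forall>\<psi>\<in>vecs d (- int m) (int n).
            Kop d h m n \<psi> \<in> tensor_sub d (- int m) 0 (int n)
               (kerH d (- int m) 0 h (- int m) 0) (kerH d 1 (int n) h 1 (int n)))
       \<and> {\<psi> \<in> vecs d (- int m) (int n). Kop d h m n \<psi> = \<psi>}
            = kerH d (- int m) (int n) h (- int m) (int n)
       \<and> ((\<exists>\<mu>::real. \<mu> < 1 \<and> (\<exists>\<psi>\<in>vecs d (- int m) (int n). \<psi> \<noteq> zero_vec \<and>
              Kop d h m n \<psi> = (\<lambda>\<sigma>. complex_of_real \<mu> * \<psi> \<sigma>)))
          \<longrightarrow> eps d h m n = Max {\<mu>::real. \<mu> < 1 \<and> (\<exists>\<psi>\<in>vecs d (- int m) (int n). \<psi> \<noteq> zero_vec \<and>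
              Kop d h m n \<psi> = (\<lambda>\<sigma>. complex_of_real \<mu> * \<psi> \<sigma>))})"
proof -
  interpret split_chain d h "- int m" "int n"
    using assms(1,3,4) by unfold_locales auto
  have Kop: "Kop d h m n = K"
    by (simp add: Defs.Kop_def K_def Gproj_eq_orth_proj Let_def fun_eq_iff)
  have range: "\<forall>\<psi>. K \<psi> \<in> tensor_sub d (- int m) 0 (int n)
      (kerH d (- int m) 0 h (- int m) 0) (kerH d 1 (int n) h 1 (int n))"
    using K_in_kerH_left_right kerH_left_right_subset_tensor by blast
  show ?thesis
    unfolding Kop Defs.eps_def Let_def Gproj_eq_orth_proj inner_prod_eq_inner_on
      vecs_eq_supported_on zero_vec_eq_0 kerH_whole_eq_Int
    by (intro conjI impI ballI range[rule_format] fixed_points_K)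
      (erule Sup_quadratic_eq_Max_eigenvalue[unfolded scale_fun_def])
qed

end
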